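(* There is a one-round proof labeling scheme for $\textsc{Permutation-Recognition}$ with certificates of size $\mathcal{O}(\log n)$; that is, a proof labeling scheme deciding whether the connected $n$-node network $G$ is a permutation graph, in which every certificate has $\mathcal{O}(\log n)$ bits.
   Context: A graph $G=([n],E)$ (with $[n]=\{0,\dots,n-1\}$) is a permutation graph if there exists a permutation $\pi$ of $[n]$ such that for all $i,j\in[n]$, $\{i,j\}\in E$ iff $(i-j)(\pi(i)-\pi(j))<0$; a general graph is a permutation graph if it is isomorphic to such a graph. $\textsc{Permutation-Recognition}$ is the set of configurations $\langle G,\mathrm{id}\rangle$ with $G$ a permutation graph. Distributed setting: $G$ is a simple connected $n$-node graph, each node has a unique identifier in $\{1,\dots,\mathrm{poly}(n)\}$, nodes know only a polynomial upper bound on $n$. A proof labeling scheme (one-round, $\mathsf{dM}$) consists of an untrusted prover assigning each node $v$ a certificate $c(v)$, followed by one deterministic verification round in which each node sees its own id and certificate and the certificates (and ids) of its neighbors and accepts or rejects. Completeness: if $G$ is in the class, some certificate assignment makes all nodes accept. Soundness: if $G$ is not in the class, for every certificate assignment at least one node rejects. Its size is the maximum certificate length in bits. *)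

theory Defs
  imports Complex_Main "HOL-Combinatorics.Permutations"
begin

definition perm_edge :: "(nat \<Rightarrow> nat) \<Rightarrow> nat \<Rightarrow> nat \<Rightarrow> bool" where
  "perm_edge \<pi> i j \<longleftrightarrow> (int i - int j) * (int (\<pi> i) - int (\<pi> j)) < 0"

definition is_permutation_graph :: "nat set \<Rightarrow> (nat \<Rightarrow> nat \<Rightarrow> bool) \<Rightarrow> bool" where
  "is_permutation_graph V E \<longleftrightarrow>
     (\<exists>f \<pi>. bij_betw f V {0..<card V} \<and> \<pi> permutes {0..<card V} \<and>
        (\<forall>u\<in>V. \<forall>v\<in>V. E u v \<longleftrightarrow> perm_edge \<pi> (f u) (f v)))"

definition simple_graph :: "nat set \<Rightarrow> (nat \<Rightarrow> nat \<Rightarrow> bool) \<Rightarrow> bool" where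
  "simple_graph V E \<longleftrightarrow> finite V \<and>
     (\<forall>u v. E u v \<longrightarrow> u \<in> V \<and> v \<in> V \<and> u \<noteq> v \<and> E v u)"

definition connected_graph :: "nat set \<Rightarrow> (nat \<Rightarrow> nat \<Rightarrow> bool) \<Rightarrow> bool" where
  "connected_graph V E \<longleftrightarrow> V \<noteq> {} \<and> (\<forall>u\<in>V. \<forall>v\<in>V. E\<^sup>*\<^sup>* u v)"

definition network :: "nat \<Rightarrow> nat set \<Rightarrow> (nat \<Rightarrow> nat \<Rightarrow> bool) \<Rightarrow> (nat \<Rightarrow> nat) \<Rightarrow> bool" where
  "network c V E ident \<longleftrightarrow> simple_graph V E \<and> connected_graph V E \<and>
     inj_on ident V \<and> (\<forall>v\<in>V. 1 \<le> ident v \<and> ident v \<le> card V ^ c)"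

(* One verification round: node v sees its id, its certificate, and the
   (id, certificate) pairs of its neighbours. *)
type_synonym verifier = "nat \<Rightarrow> bool list \<Rightarrow> (nat \<times> bool list) set \<Rightarrow> bool"

definition all_accept :: "verifier \<Rightarrow> nat set \<Rightarrow> (nat \<Rightarrow> nat \<Rightarrow> bool) \<Rightarrow> (nat \<Rightarrow> nat)
    \<Rightarrow> (nat \<Rightarrow> bool list) \<Rightarrow> bool" where
  "all_accept D V E ident cert \<longleftrightarrow>
     (\<forall>v\<in>V. D (ident v) (cert v) {(ident u, cert u) | u. E v u})"

end

theory Submission
  imports Defs
begin

text \<open>
  Encode a permutation graph by the two rankings \<open>x\<close> (position) and \<open>y\<close> (value of the
  permutation) of its vertices; the edges are then exactly the discordant pairs. Every node
  stores \<open>x v\<close> and \<open>y v\<close>. Locally a node can check that its neighbours are discordant with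
  it and that the number of its neighbours left of it minus the number right of it equals
  \<open>x v - y v\<close>; if \<open>x\<close> and \<open>y\<close> are bijections onto \<open>{0..<n}\<close>, this balance forces every
  discordant pair to be an edge (consider the leftmost node with a missing discordant
  partner).

  Bijectivity of a ranking \<open>x\<close> is certified in two parts. A spanning tree with subtree sums
  lets the root check \<open>\<Sum>x = n(n-1)/2\<close>. And each node \<open>v\<close> with \<open>x v > 0\<close> certifies a
  predecessor \<open>p\<close> with \<open>x v \<le> x p + 1 + |{z. x p < x z < x v}|\<close>; by induction this gives
  \<open>x v \<le> |{z. x z < x v}|\<close>, and together with the sum this forces \<open>x\<close> to be a bijection.
  The predecessor is a neighbour of \<open>v\<close> if there is one further left, otherwise the node
  left of \<open>v\<close> with largest \<open>y\<close>, which is joined to \<open>v\<close> through a common neighbour. In both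
  cases the nodes strictly between are neighbours of \<open>p\<close> or of \<open>v\<close>, so they can be
  counted locally. Every certificate is a fixed number of integers bounded by a polynomial
  in \<open>n\<close>, hence has \<open>O(log n)\<close> bits.
\<close>

section \<open>Encoding lists of numbers\<close>

fun nat_code :: "nat \<Rightarrow> bool list" where
  "nat_code k = (if k = 0 then [False] else True # odd k # nat_code (k div 2))"

declare nat_code.simps[simp del]

fun nat_decode :: "bool list \<Rightarrow> (nat \<times> bool list) option" where
  "nat_decode [] = None"
| "nat_decode (False # r) = Some (0, r)"
| "nat_decode [True] = None"
| "nat_decode (True # b # r) =
     (case nat_decode r of None \<Rightarrow> None | Some (k, r') \<Rightarrow> Some ((if b then 1 else 0) + 2 * k, r'))"

lemma nat_decode_nat_code: "nat_decode (nat_code k @ r) = Some (k, r)"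
proof (induction k rule: nat_code.induct)
  case (1 k)
  show ?case
  proof (cases "k = 0")
    case True
    then show ?thesis by (simp add: nat_code.simps)
  next
    case False
    then have "nat_decode (nat_code k @ r) =
        (case nat_decode (nat_code (k div 2) @ r) of None \<Rightarrow> None
         | Some (k', r') \<Rightarrow> Some ((if odd k then 1 else 0) + 2 * k', r'))"
      by (simp add: nat_code.simps[of k])
    also have "\<dots> = Some (k, r)" using 1 False by simp
    finally show ?thesis .
  qed
qed

definition nats_code :: "nat list \<Rightarrow> bool list" where
  "nats_code ks = concat (map nat_code ks)"

fun nats_decode :: "nat \<Rightarrow> bool list \<Rightarrow> nat list option" where
  "nats_decode 0 bs = (if bs = [] then Some [] else None)"
| "nats_decode (Suc m) bs =
     (case nat_decode bs of None \<Rightarrow> None | Some (k, r) \<Rightarrow> map_option (Cons k) (nats_decode m r))"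

lemma nats_decode_nats_code: "length ks = m \<Longrightarrow> nats_decode m (nats_code ks) = Some ks"
proof (induction ks arbitrary: m)
  case Nil
  then show ?case by (simp add: nats_code_def)
next
  case (Cons k ks)
  then obtain m' where m: "m = Suc m'" by auto
  have "nats_code (k # ks) = nat_code k @ nats_code ks" by (simp add: nats_code_def)
  then show ?case using Cons m by (simp add: nat_decode_nat_code)
qed

fun bit_count :: "nat \<Rightarrow> nat" where
  "bit_count k = (if k = 0 then 0 else Suc (bit_count (k div 2)))"

declare bit_count.simps[simp del]

lemma length_nat_code: "length (nat_code k) = 2 * bit_count k + 1"
proof (induction k rule: nat_code.induct)
  case (1 k)
  then show ?case by (cases "k = 0") (simp_all add: nat_code.simps bit_count.simps)
qed

lemma two_power_bit_count_le: "k > 0 \<Longrightarrow> 2 ^ bit_count k \<le> 2 * k"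
proof (induction k rule: bit_count.induct)
  case (1 k)
  show ?case
  proof (cases "k div 2 = 0")
    case True
    then have "bit_count (k div 2) = 0" by (simp add: bit_count.simps)
    then show ?thesis using 1(2) by (simp add: bit_count.simps[of k])
  next
    case False
    then have "2 ^ bit_count (k div 2) \<le> 2 * (k div 2)" using 1 by simp
    then show ?thesis using 1(2) by (simp add: bit_count.simps[of k])
  qed
qed

lemma length_nat_code_le_log:
  assumes n: "n \<ge> 1" and k: "k \<le> (n + 1) ^ e"
  shows "real (length (nat_code k)) \<le> (2 * real e + 3) * log 2 (real n + 1)"
proof -
  have log_ge_1: "log 2 (real n + 1) \<ge> 1" using n by simp
  show ?thesis
  proof (cases "k = 0")
    case True
    then have "real (length (nat_code k)) = 1 * 1" by (simp add: nat_code.simps)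
    also have "\<dots> \<le> (2 * real e + 3) * log 2 (real n + 1)"
      using log_ge_1 by (intro mult_mono) auto
    finally show ?thesis .
  next
    case False
    have "2 ^ bit_count k \<le> 2 * (n + 1) ^ e"
      using two_power_bit_count_le[of k] False k by simp
    then have pow: "(2::real) ^ bit_count k \<le> 2 * (real n + 1) ^ e"
      by (metis (mono_tags, lifting) of_nat_1 of_nat_add of_nat_le_iff of_nat_mult of_nat_numeral of_nat_power)
    have "real (bit_count k) = log 2 (2 ^ bit_count k)" by (simp add: log_nat_power)
    also have "\<dots> \<le> log 2 (2 * (real n + 1) ^ e)" using pow by (intro log_mono) auto
    also have "\<dots> = 1 + real e * log 2 (real n + 1)" by (simp add: log_mult log_nat_power)
    finally have bits: "real (bit_count k) \<le> 1 + real e * log 2 (real n + 1)" .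
    have "real (length (nat_code k)) = 2 * real (bit_count k) + 1" by (simp add: length_nat_code)
    also have "\<dots> \<le> 3 + 2 * real e * log 2 (real n + 1)" using bits by simp
    also have "\<dots> \<le> (2 * real e + 3) * log 2 (real n + 1)" using log_ge_1 by (simp add: algebra_simps)
    finally show ?thesis .
  qed
qed

lemma length_nats_code_le_log:
  assumes n: "n \<ge> 1" and bounded: "\<forall>k\<in>set ks. k \<le> (n + 1) ^ e"
  shows "real (length (nats_code ks)) \<le> real (length ks) * ((2 * real e + 3) * log 2 (real n + 1))"
  using bounded
proof (induction ks)
  case Nil
  then show ?case by (simp add: nats_code_def)
next
  case (Cons k ks)
  have "real (length (nats_code (k # ks))) = real (length (nat_code k)) + real (length (nats_code ks))"
    by (simp add: nats_code_def)
  also have "\<dots> \<le> (2 * real e + 3) * log 2 (real n + 1)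
      + real (length ks) * ((2 * real e + 3) * log 2 (real n + 1))"
    using length_nat_code_le_log[OF n] Cons by (intro add_mono) auto
  finally show ?case by (simp add: algebra_simps)
qed

section \<open>Rankings\<close>

lemma sum_roots_of_forest:
  fixes f :: "'a \<Rightarrow> nat"
  assumes fin: "finite V"
    and parent_in: "\<forall>u\<in>V. \<not> is_root u \<longrightarrow> parent u \<in> V"
    and subtree_sum: "\<forall>v\<in>V. f v = g v + (\<Sum>u\<in>{u\<in>V. \<not> is_root u \<and> parent u = v}. f u)"
  shows "(\<Sum>u\<in>{u\<in>V. is_root u}. f u) = (\<Sum>v\<in>V. g v)"
proof -
  have "(\<Sum>v\<in>V. \<Sum>u\<in>{u\<in>V. \<not> is_root u \<and> parent u = v}. f u)
      = (\<Sum>u\<in>V. \<Sum>v\<in>{v\<in>V. \<not> is_root u \<and> parent u = v}. f u)"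
    by (rule sum.swap_restrict[OF fin fin])
  also have "\<dots> = (\<Sum>u\<in>V. if \<not> is_root u then f u else 0)"
  proof (intro sum.cong refl)
    fix u assume "u \<in> V"
    then have "\<not> is_root u \<Longrightarrow> {v\<in>V. \<not> is_root u \<and> parent u = v} = {parent u}"
      using parent_in by auto
    then show "(\<Sum>v\<in>{v\<in>V. \<not> is_root u \<and> parent u = v}. f u) = (if \<not> is_root u then f u else 0)"
      by auto
  qed
  also have "\<dots> = (\<Sum>u\<in>{u\<in>V. \<not> is_root u}. f u)"
    using sum.inter_filter[OF fin, of f "\<lambda>u. \<not> is_root u"] by simp
  finally have children: "(\<Sum>v\<in>V. \<Sum>u\<in>{u\<in>V. \<not> is_root u \<and> parent u = v}. f u)
      = (\<Sum>u\<in>{u\<in>V. \<not> is_root u}. f u)" .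
  have "(\<Sum>v\<in>V. f v) = (\<Sum>v\<in>V. g v + (\<Sum>u\<in>{u\<in>V. \<not> is_root u \<and> parent u = v}. f u))"
    using subtree_sum by (intro sum.cong) auto
  then have "(\<Sum>v\<in>V. f v) = (\<Sum>v\<in>V. g v) + (\<Sum>u\<in>{u\<in>V. \<not> is_root u}. f u)"
    by (simp only: sum.distrib children)
  moreover have "V - {u\<in>V. \<not> is_root u} = {u\<in>V. is_root u}" by auto
  then have "(\<Sum>v\<in>V. f v) = (\<Sum>u\<in>{u\<in>V. is_root u}. f u) + (\<Sum>u\<in>{u\<in>V. \<not> is_root u}. f u)"
    using sum.subset_diff[of "{u\<in>V. \<not> is_root u}" V f] fin by simp
  ultimately show ?thesis by simp
qed

lemma rank_lower_bound_from_steps: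
  fixes x :: "'a \<Rightarrow> nat"
  assumes fin: "finite V"
    and step: "\<forall>v\<in>V. x v \<noteq> 0 \<longrightarrow>
      (\<exists>p\<in>V. x p < x v \<and> x v \<le> x p + 1 + card {z\<in>V. x p < x z \<and> x z < x v})"
    and v: "v \<in> V"
  shows "x v \<le> card {z\<in>V. x z < x v}"
  using v
proof (induction "x v" arbitrary: v rule: less_induct)
  case less
  show ?case
  proof (cases "x v = 0")
    case False
    then obtain p where p: "p \<in> V" "x p < x v"
      and gap: "x v \<le> x p + 1 + card {z\<in>V. x p < x z \<and> x z < x v}"
      using step less.prems by blast
    define below where "below = {z\<in>V. x z < x p}"
    define between where "between = {z\<in>V. x p < x z \<and> x z < x v}"
    have "x p \<le> card below" using less.hyps p unfolding below_def by blast
    moreover have "card (below \<union> between) = card below + card between"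
      using fin unfolding below_def between_def by (intro card_Un_disjoint) auto
    then have "card (insert p (below \<union> between)) = card below + 1 + card between"
      using fin unfolding below_def between_def by (subst card_insert_disjoint) auto
    moreover have "card (insert p (below \<union> between)) \<le> card {z\<in>V. x z < x v}"
      using fin p unfolding below_def between_def by (intro card_mono) auto
    ultimately show ?thesis using gap unfolding between_def by linarith
  qed simp
qed

lemma rank_bounded_sum:
  fixes x :: "'a \<Rightarrow> nat"
  assumes "finite V" "card V = n" "\<forall>v\<in>V. x v \<le> card {z\<in>V. x z < x v}"
  shows "2 * sum x V \<le> n * (n - 1) \<and> (2 * sum x V = n * (n - 1) \<longrightarrow> bij_betw x V {0..<n})"
  using assms
proof (induction n arbitrary: V)
  case 0
  then show ?case by (simp add: bij_betw_def)
next
  case (Suc n)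
  have fin: "finite V" and ne: "V \<noteq> {}" using Suc.prems by auto
  have "Max (x ` V) \<in> x ` V" using fin ne by simp
  then obtain m where m: "m \<in> V" "x m = Max (x ` V)" by auto
  have m_max: "\<forall>z\<in>V. x z \<le> x m" using m fin by simp
  define V' where "V' = V - {m}"
  have card_V': "card V' = n" and fin_V': "finite V'"
    using Suc.prems m unfolding V'_def by auto
  have "\<forall>v\<in>V'. {z\<in>V'. x z < x v} = {z\<in>V. x z < x v}"
    using m_max unfolding V'_def by fastforce
  then have "\<forall>v\<in>V'. x v \<le> card {z\<in>V'. x z < x v}"
    using Suc.prems(3) unfolding V'_def by auto
  then have IH: "2 * sum x V' \<le> n * (n - 1) \<and> (2 * sum x V' = n * (n - 1) \<longrightarrow> bij_betw x V' {0..<n})"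
    using Suc.IH fin_V' card_V' by blast
  have "card {z\<in>V. x z < x m} \<le> card V'"
    using fin_V' unfolding V'_def by (intro card_mono) auto
  then have xm: "x m \<le> n" using Suc.prems(3) m(1) card_V' by (metis le_trans)
  have sum_V: "sum x V = x m + sum x V'"
    unfolding V'_def using fin m(1) by (simp add: sum.remove)
  have triangle: "Suc n * (Suc n - 1) = 2 * n + n * (n - 1)" by (cases n) (auto simp: algebra_simps)
  have "2 * sum x V \<le> Suc n * (Suc n - 1)" using sum_V IH xm triangle by simp
  moreover have "bij_betw x V {0..<Suc n}" if eq: "2 * sum x V = Suc n * (Suc n - 1)"
  proof -
    have xmn: "x m = n" and "2 * sum x V' = n * (n - 1)" using eq sum_V triangle IH xm by linarith+
    then have "bij_betw x V' {0..<n}" using IH by simp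
    then have "bij_betw x (V' \<union> {m}) ({0..<n} \<union> {x m})"
      using notIn_Un_bij_betw3[of m V' x "{0..<n}"] xmn unfolding V'_def by simp
    moreover have "V' \<union> {m} = V" using m(1) unfolding V'_def by auto
    moreover have "{0..<n} \<union> {x m} = {0..<Suc n}" using xmn by auto
    ultimately show ?thesis by simp
  qed
  ultimately show ?case by simp
qed

lemma bij_betw_interval_if_rank_bounded:
  fixes x :: "'a \<Rightarrow> nat"
  assumes "finite V" "\<forall>v\<in>V. x v \<le> card {z\<in>V. x z < x v}" "2 * sum x V = card V * (card V - 1)"
  shows "bij_betw x V {0..<card V}"
  using rank_bounded_sum[OF assms(1) refl assms(2)] assms(3) by simp

lemma card_less_bij_betw_interval:
  fixes x :: "'a \<Rightarrow> nat"
  assumes bij: "bij_betw x V {0..<n}" and v: "v \<in> V"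
  shows "card {z\<in>V. x z < x v} = x v"
proof -
  have "x v < n" using bij v unfolding bij_betw_def by auto
  then have "{0..<x v} \<subseteq> x ` V" using bij unfolding bij_betw_def by auto
  then have "x ` {z\<in>V. x z < x v} = {0..<x v}" by auto
  moreover have "inj_on x {z\<in>V. x z < x v}"
    using bij unfolding bij_betw_def by (auto intro: inj_on_subset)
  ultimately show ?thesis using card_image by fastforce
qed

lemma double_sum_bij_betw_interval:
  assumes "bij_betw (x :: 'a \<Rightarrow> nat) V {0..<n}"
  shows "2 * (\<Sum>v\<in>V. x v) = n * (n - 1)"
proof -
  have "(\<Sum>v\<in>V. x v) = (\<Sum>k<n. k)"
    using sum.reindex_bij_betw[OF assms, of "\<lambda>k. k"] by (simp add: atLeast0LessThan)
  moreover have "2 * (\<Sum>k<n. k) = n * (n - 1 :: nat)"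
    by (induction n) (auto simp: algebra_simps)
  ultimately show ?thesis by simp
qed

section \<open>Discordant pairs\<close>

definition discordant :: "('a \<Rightarrow> nat) \<Rightarrow> ('a \<Rightarrow> nat) \<Rightarrow> 'a \<Rightarrow> 'a \<Rightarrow> bool" where
  "discordant x y u v \<longleftrightarrow> (x u < x v \<and> y v < y u) \<or> (x v < x u \<and> y u < y v)"

lemma discordant_balance:
  fixes x y :: "'a \<Rightarrow> nat"
  assumes fin: "finite V" and bij_x: "bij_betw x V {0..<n}" and bij_y: "bij_betw y V {0..<n}"
    and v: "v \<in> V"
  shows "int (card {z\<in>V. x z < x v \<and> y v < y z}) - int (card {z\<in>V. x v < x z \<and> y z < y v})
    = int (x v) - int (y v)"
proof -
  have "z \<in> V \<Longrightarrow> x z < x v \<Longrightarrow> y z \<noteq> y v" for z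
    using bij_y v unfolding bij_betw_def by (metis inj_on_contraD less_irrefl)
  then have left: "{z\<in>V. x z < x v}
      = {z\<in>V. x z < x v \<and> y v < y z} \<union> {z\<in>V. x z < x v \<and> y z < y v}"
    by (auto simp: linorder_neq_iff)
  have "z \<in> V \<Longrightarrow> y z < y v \<Longrightarrow> x z \<noteq> x v" for z
    using bij_x v unfolding bij_betw_def by (metis inj_on_contraD less_irrefl)
  then have below: "{z\<in>V. y z < y v}
      = {z\<in>V. x v < x z \<and> y z < y v} \<union> {z\<in>V. x z < x v \<and> y z < y v}"
    by (auto simp: linorder_neq_iff)
  have "x v = card {z\<in>V. x z < x v \<and> y v < y z} + card {z\<in>V. x z < x v \<and> y z < y v}"
    using card_less_bij_betw_interval[OF bij_x v] left fin by (simp add: card_Un_disjoint disjoint_iff)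
  moreover have "y v = card {z\<in>V. x v < x z \<and> y z < y v} + card {z\<in>V. x z < x v \<and> y z < y v}"
    using card_less_bij_betw_interval[OF bij_y v] below fin by (simp add: card_Un_disjoint disjoint_iff)
  ultimately show ?thesis by simp
qed

text \<open>If all discordant partners of \<open>v\<close> on its left are neighbours, the balance condition
  at \<open>v\<close> leaves no room for a missing partner on its right.\<close>

lemma discordant_neighbours_if_balanced:
  fixes x y :: "'a \<Rightarrow> nat"
  assumes fin: "finite V" and bij_x: "bij_betw x V {0..<n}" and bij_y: "bij_betw y V {0..<n}"
    and v: "v \<in> V" and nbrs: "\<forall>u. E v u \<longrightarrow> u \<in> V \<and> discordant x y v u"
    and balanced: "int (card {u. E v u \<and> x u < x v}) - int (card {u. E v u \<and> x v < x u})
      = int (x v) - int (y v)"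
    and left: "\<forall>u\<in>V. x u < x v \<longrightarrow> discordant x y v u \<longrightarrow> E v u"
    and u: "u \<in> V" "discordant x y v u"
  shows "E v u"
proof -
  define L where "L = {z\<in>V. x z < x v \<and> y v < y z}"
  define R where "R = {z\<in>V. x v < x z \<and> y z < y v}"
  have "{u. E v u \<and> x u < x v} = L"
    using nbrs left unfolding L_def discordant_def by auto
  moreover have R_nbrs: "{u. E v u \<and> x v < x u} \<subseteq> R"
    using nbrs unfolding R_def discordant_def by auto
  ultimately have "card {u. E v u \<and> x v < x u} = card R"
    using discordant_balance[OF fin bij_x bij_y v] balanced unfolding L_def R_def by simp
  then have "R \<subseteq> {u. E v u}"
    using R_nbrs fin card_subset_eq[of R "{u. E v u \<and> x v < x u}"] unfolding R_def by auto
  then show ?thesis using u left unfolding R_def discordant_def by auto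
qed

lemma discordant_imp_edge:
  fixes x y :: "'a \<Rightarrow> nat"
  assumes fin: "finite V" and bij_x: "bij_betw x V {0..<n}" and bij_y: "bij_betw y V {0..<n}"
    and sym: "\<forall>u v. E u v \<longrightarrow> u \<in> V \<and> v \<in> V \<and> E v u"
    and edges: "\<forall>u v. E u v \<longrightarrow> discordant x y u v"
    and balanced: "\<forall>v\<in>V. int (card {u. E v u \<and> x u < x v}) - int (card {u. E v u \<and> x v < x u})
      = int (x v) - int (y v)"
    and v: "v \<in> V" and u: "u \<in> V" "discordant x y v u"
  shows "E v u"
  using v u
proof (induction "x v" arbitrary: v u rule: less_induct)
  case less
  have left: "\<forall>u'\<in>V. x u' < x v \<longrightarrow> discordant x y v u' \<longrightarrow> E v u'"
  proof (intro ballI impI)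
    fix u' assume u': "u' \<in> V" "x u' < x v" "discordant x y v u'"
    then have "discordant x y u' v" unfolding discordant_def by auto
    then have "E u' v" using less.hyps[OF u'(2,1) less.prems(1)] by blast
    then show "E v u'" using sym by blast
  qed
  have nbrs: "\<forall>u. E v u \<longrightarrow> u \<in> V \<and> discordant x y v u" using sym edges by blast
  have balanced_v: "int (card {u. E v u \<and> x u < x v}) - int (card {u. E v u \<and> x v < x u})
      = int (x v) - int (y v)"
    using balanced less.prems(1) by blast
  show ?case
    by (rule discordant_neighbours_if_balanced[where E = E, OF fin bij_x bij_y less.prems(1) nbrs balanced_v left
          less.prems(2,3)])
qed

lemma perm_edge_iff:
  "perm_edge \<pi> a b \<longleftrightarrow> (a < b \<and> \<pi> b < \<pi> a) \<or> (b < a \<and> \<pi> a < \<pi> b)"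
  unfolding perm_edge_def by (auto simp: mult_less_0_iff)

lemma is_permutation_graph_iff_discordant_rankings:
  "is_permutation_graph V E \<longleftrightarrow>
    (\<exists>x y. bij_betw x V {0..<card V} \<and> bij_betw y V {0..<card V}
      \<and> (\<forall>u\<in>V. \<forall>v\<in>V. E u v \<longleftrightarrow> discordant x y u v))"
proof
  assume "is_permutation_graph V E"
  then obtain f \<pi> where f: "bij_betw f V {0..<card V}" and \<pi>: "\<pi> permutes {0..<card V}"
    and edges: "\<forall>u\<in>V. \<forall>v\<in>V. E u v \<longleftrightarrow> perm_edge \<pi> (f u) (f v)"
    unfolding is_permutation_graph_def by blast
  have "bij_betw (\<pi> \<circ> f) V {0..<card V}"
    using bij_betw_trans[OF f permutes_imp_bij[OF \<pi>]] .
  moreover have "\<forall>u\<in>V. \<forall>v\<in>V. E u v \<longleftrightarrow> discordant f (\<pi> \<circ> f) u v"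
    using edges unfolding perm_edge_iff discordant_def by auto
  ultimately show "\<exists>x y. bij_betw x V {0..<card V} \<and> bij_betw y V {0..<card V}
      \<and> (\<forall>u\<in>V. \<forall>v\<in>V. E u v \<longleftrightarrow> discordant x y u v)"
    using f by blast
next
  assume "\<exists>x y. bij_betw x V {0..<card V} \<and> bij_betw y V {0..<card V}
      \<and> (\<forall>u\<in>V. \<forall>v\<in>V. E u v \<longleftrightarrow> discordant x y u v)"
  then obtain x y where x: "bij_betw x V {0..<card V}" and y: "bij_betw y V {0..<card V}"
    and edges: "\<forall>u\<in>V. \<forall>v\<in>V. E u v \<longleftrightarrow> discordant x y u v" by blast
  define \<pi> where "\<pi> k = (if k < card V then y (inv_into V x k) else k)" for k
  have "bij_betw (y \<circ> inv_into V x) {0..<card V} {0..<card V}"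
    by (rule bij_betw_trans[OF bij_betw_inv_into[OF x] y])
  then have "bij_betw \<pi> {0..<card V} {0..<card V}"
    by (rule iffD1[OF bij_betw_cong, rotated]) (simp add: \<pi>_def)
  then have \<pi>: "\<pi> permutes {0..<card V}"
    by (rule bij_imp_permutes) (simp add: \<pi>_def)
  have \<pi>_x: "\<pi> (x u) = y u" if "u \<in> V" for u
    using that x inv_into_f_f[of x V u] unfolding \<pi>_def bij_betw_def by auto
  have "\<forall>u\<in>V. \<forall>v\<in>V. E u v \<longleftrightarrow> perm_edge \<pi> (x u) (x v)"
    using edges \<pi>_x unfolding perm_edge_iff discordant_def by auto
  then show "is_permutation_graph V E"
    unfolding is_permutation_graph_def using x \<pi> by blast
qed

section \<open>The verifier\<close>

text \<open>A certificate decodes to a list of 19 numbers: the spanning-tree data, the positions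
  \<open>x\<close> and \<open>y\<close>, and two blocks of chain data, at offset 7 for the ranking \<open>x\<close> and at offset 13
  for \<open>y\<close>.\<close>

definition root_id :: "nat list \<Rightarrow> nat" where "root_id r = r ! 0"
definition parent_id :: "nat list \<Rightarrow> nat" where "parent_id r = r ! 1"
definition subtree_size :: "nat list \<Rightarrow> nat" where "subtree_size r = r ! 2"
definition subtree_sum_x :: "nat list \<Rightarrow> nat" where "subtree_sum_x r = r ! 3"
definition subtree_sum_y :: "nat list \<Rightarrow> nat" where "subtree_sum_y r = r ! 4"
definition pos_x :: "nat list \<Rightarrow> nat" where "pos_x r = r ! 5"
definition pos_y :: "nat list \<Rightarrow> nat" where "pos_y r = r ! 6"

definition chain_mode :: "nat \<Rightarrow> nat list \<Rightarrow> nat" where "chain_mode k r = r ! k"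
definition chain_pred :: "nat \<Rightarrow> nat list \<Rightarrow> nat" where "chain_pred k r = r ! (k + 1)"
definition chain_relay :: "nat \<Rightarrow> nat list \<Rightarrow> nat" where "chain_relay k r = r ! (k + 2)"
definition chain_near_count :: "nat \<Rightarrow> nat list \<Rightarrow> nat" where "chain_near_count k r = r ! (k + 3)"
definition chain_far_target :: "nat \<Rightarrow> nat list \<Rightarrow> nat" where "chain_far_target k r = r ! (k + 4)"
definition chain_far_count :: "nat \<Rightarrow> nat list \<Rightarrow> nat" where "chain_far_count k r = r ! (k + 5)"

text \<open>In mode 1 the predecessor is the neighbour \<open>chain_pred\<close>; the nodes between it and us that
  lie above us in \<open>Y\<close> are our neighbours, counted in \<open>chain_near_count\<close>, and the others are
  neighbours of the predecessor, which checks the gap. In mode 2 the predecessor \<open>chain_pred\<close>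
  is not a neighbour; all nodes between are its neighbours, it announces our position in
  \<open>chain_far_target\<close> together with their number \<open>chain_far_count\<close>, and the common neighbour
  \<open>chain_relay\<close> checks that this matches.\<close>

definition chain_check ::
    "nat \<Rightarrow> nat list \<Rightarrow> (nat \<times> nat list) set \<Rightarrow> (nat list \<Rightarrow> nat) \<Rightarrow> (nat list \<Rightarrow> nat) \<Rightarrow> nat \<Rightarrow> bool"
  where
  "chain_check i r nbrs X Y k \<longleftrightarrow>
    chain_mode k r \<le> 2 \<and>
    (chain_mode k r = 0 \<longrightarrow> X r = 0) \<and>
    (chain_mode k r = 1 \<longrightarrow> (\<exists>p\<in>nbrs. fst p = chain_pred k r \<and> X (snd p) < X r \<and>
        chain_near_count k r = card {q\<in>nbrs. X (snd p) < X (snd q) \<and> X (snd q) < X r \<and> Y r < Y (snd q)})) \<and>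
    (chain_mode k r = 2 \<longrightarrow> (\<exists>p\<in>nbrs. fst p = chain_relay k r)) \<and>
    (\<forall>p\<in>nbrs. chain_mode k (snd p) = 1 \<and> chain_pred k (snd p) = i \<longrightarrow>
       X (snd p) = X r + 1 + chain_near_count k (snd p)
         + card {q\<in>nbrs. X r < X (snd q) \<and> X (snd q) < X (snd p) \<and> Y (snd q) < Y (snd p)}) \<and>
    chain_far_count k r = card {q\<in>nbrs. X r < X (snd q) \<and> X (snd q) < chain_far_target k r} \<and>
    (\<forall>p\<in>nbrs. chain_mode k (snd p) = 2 \<and> chain_relay k (snd p) = i \<longrightarrow>
       (\<exists>q\<in>nbrs. fst q = chain_pred k (snd p) \<and> X (snd q) < X (snd p) \<and>
          chain_far_target k (snd q) = X (snd p) \<and> X (snd p) = X (snd q) + 1 + chain_far_count k (snd q)))"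

definition tree_children :: "nat \<Rightarrow> (nat \<times> nat list) set \<Rightarrow> (nat \<times> nat list) set" where
  "tree_children i nbrs = {p\<in>nbrs. parent_id (snd p) = i \<and> fst p \<noteq> root_id (snd p)}"

definition local_check :: "nat \<Rightarrow> nat list \<Rightarrow> (nat \<times> nat list) set \<Rightarrow> bool" where
  "local_check i r nbrs \<longleftrightarrow>
    (\<forall>p\<in>nbrs. root_id (snd p) = root_id r) \<and>
    (if i = root_id r
     then 2 * subtree_sum_x r = subtree_size r * (subtree_size r - 1)
        \<and> 2 * subtree_sum_y r = subtree_size r * (subtree_size r - 1)
     else (\<exists>p\<in>nbrs. fst p = parent_id r)) \<and>
    subtree_size r = 1 + (\<Sum>p\<in>tree_children i nbrs. subtree_size (snd p)) \<and>
    subtree_sum_x r = pos_x r + (\<Sum>p\<in>tree_children i nbrs. subtree_sum_x (snd p)) \<and>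
    subtree_sum_y r = pos_y r + (\<Sum>p\<in>tree_children i nbrs. subtree_sum_y (snd p)) \<and>
    (\<forall>p\<in>nbrs. discordant pos_x pos_y r (snd p)) \<and>
    int (card {p\<in>nbrs. pos_x (snd p) < pos_x r}) - int (card {p\<in>nbrs. pos_x r < pos_x (snd p)})
      = int (pos_x r) - int (pos_y r) \<and>
    chain_check i r nbrs pos_x pos_y 7 \<and> chain_check i r nbrs pos_y pos_x 13"

definition perm_verifier :: verifier where
  "perm_verifier i c S \<longleftrightarrow>
    (case nats_decode 19 c of
      None \<Rightarrow> False
    | Some r \<Rightarrow> (\<forall>p\<in>S. nats_decode 19 (snd p) \<noteq> None)
        \<and> local_check i r ((\<lambda>p. (fst p, the (nats_decode 19 (snd p)))) ` S))"

section \<open>Soundness\<close>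

lemma card_filter_image_pair:
  assumes "inj_on g U"
  shows "card {p\<in>(\<lambda>u. (g u, F u)) ` U. P p} = card {u\<in>U. P (g u, F u)}"
proof -
  have "{p\<in>(\<lambda>u. (g u, F u)) ` U. P p} = (\<lambda>u. (g u, F u)) ` {u\<in>U. P (g u, F u)}" by auto
  moreover have "inj_on (\<lambda>u. (g u, F u)) {u\<in>U. P (g u, F u)}"
    using assms by (auto simp: inj_on_def)
  ultimately show ?thesis by (simp add: card_image)
qed

lemma sum_filter_image_pair:
  assumes "inj_on g U"
  shows "(\<Sum>p\<in>{p\<in>(\<lambda>u. (g u, F u)) ` U. P p}. h (snd p)) = (\<Sum>u\<in>{u\<in>U. P (g u, F u)}. h (F u))"
proof -
  have "{p\<in>(\<lambda>u. (g u, F u)) ` U. P p} = (\<lambda>u. (g u, F u)) ` {u\<in>U. P (g u, F u)}" by auto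
  moreover have "inj_on (\<lambda>u. (g u, F u)) {u\<in>U. P (g u, F u)}"
    using assms by (auto simp: inj_on_def)
  ultimately show ?thesis by (simp add: sum.reindex)
qed

locale labelled_network =
  fixes V :: "nat set" and E :: "nat \<Rightarrow> nat \<Rightarrow> bool" and ident :: "nat \<Rightarrow> nat"
    and F :: "nat \<Rightarrow> nat list"
  assumes fin: "finite V" and nonempty: "V \<noteq> {}"
    and sym: "\<forall>u v. E u v \<longrightarrow> u \<in> V \<and> v \<in> V \<and> E v u"
    and conn: "\<forall>u\<in>V. \<forall>v\<in>V. E\<^sup>*\<^sup>* u v"
    and inj: "inj_on ident V"
begin

definition view :: "nat \<Rightarrow> (nat \<times> nat list) set" where
  "view v = (\<lambda>u. (ident u, F u)) ` {u. E v u}"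

lemma edge_in_V1: "E u v \<Longrightarrow> u \<in> V" using sym by blast
lemma edge_in_V2: "E u v \<Longrightarrow> v \<in> V" using sym by blast
lemma edge_sym: "E u v \<Longrightarrow> E v u" using sym by blast
lemma ident_eq_iff: "u \<in> V \<Longrightarrow> v \<in> V \<Longrightarrow> ident u = ident v \<longleftrightarrow> u = v"
  using inj by (auto simp: inj_on_eq_iff)

lemma finite_neighbours: "finite {u. E v u \<and> P u}"
  using fin edge_in_V2 by (auto intro: finite_subset[rotated])

lemma ball_view: "(\<forall>p\<in>view v. P p) \<longleftrightarrow> (\<forall>u. E v u \<longrightarrow> P (ident u, F u))"
  unfolding view_def by auto

lemma bex_view: "(\<exists>p\<in>view v. P p) \<longleftrightarrow> (\<exists>u. E v u \<and> P (ident u, F u))"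
  unfolding view_def by auto

lemma inj_on_ident_neighbours: "inj_on ident {u. E v u}"
  using inj edge_in_V2 by (auto intro: inj_on_subset)

lemma card_view: "card {p\<in>view v. P p} = card {u. E v u \<and> P (ident u, F u)}"
  unfolding view_def using card_filter_image_pair[OF inj_on_ident_neighbours] by simp

lemma sum_view:
  "(\<Sum>p\<in>{p\<in>view v. P p}. h (snd p)) = (\<Sum>u\<in>{u. E v u \<and> P (ident u, F u)}. h (F u))"
  unfolding view_def using sum_filter_image_pair[OF inj_on_ident_neighbours] by simp

lemma constant_if_edge_invariant:
  assumes "\<forall>a b. E a b \<longrightarrow> g a = g b" and "u \<in> V" "v \<in> V"
  shows "g u = g v"
proof -
  have "E\<^sup>*\<^sup>* u v" using conn assms(2,3) by simp
  then show ?thesis by (induction rule: rtranclp_induct) (use assms(1) in auto)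
qed

lemma chain_step_near:
  assumes checks: "\<forall>v\<in>V. chain_check (ident v) (F v) (view v) X Y k"
    and v: "v \<in> V" and mode: "chain_mode k (F v) = 1"
  shows "\<exists>p\<in>V. X (F p) < X (F v)
    \<and> X (F v) \<le> X (F p) + 1 + card {z\<in>V. X (F p) < X (F z) \<and> X (F z) < X (F v)}"
proof -
  obtain u where vu: "E v u" and ident_u: "ident u = chain_pred k (F v)"
    and u_below: "X (F u) < X (F v)"
    and near: "chain_near_count k (F v)
      = card {z. E v z \<and> X (F u) < X (F z) \<and> X (F z) < X (F v) \<and> Y (F v) < Y (F z)}"
    using checks v mode unfolding chain_check_def bex_view card_view by auto
  have u: "u \<in> V" using vu edge_in_V2 by blast
  have "X (F v) = X (F u) + 1 + chain_near_count k (F v)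
      + card {z. E u z \<and> X (F u) < X (F z) \<and> X (F z) < X (F v) \<and> Y (F z) < Y (F v)}"
    using checks u mode ident_u edge_sym[OF vu] unfolding chain_check_def ball_view card_view by auto
  also have "\<dots> = X (F u) + 1 + card
      ({z. E v z \<and> X (F u) < X (F z) \<and> X (F z) < X (F v) \<and> Y (F v) < Y (F z)}
       \<union> {z. E u z \<and> X (F u) < X (F z) \<and> X (F z) < X (F v) \<and> Y (F z) < Y (F v)})"
    unfolding near by (subst card_Un_disjoint) (auto intro: finite_neighbours)
  also have "\<dots> \<le> X (F u) + 1 + card {z\<in>V. X (F u) < X (F z) \<and> X (F z) < X (F v)}"
    using fin edge_in_V2 by (intro add_left_mono card_mono) auto
  finally show ?thesis using u u_below by blast
qed

lemma chain_step_far: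
  assumes checks: "\<forall>v\<in>V. chain_check (ident v) (F v) (view v) X Y k"
    and v: "v \<in> V" and mode: "chain_mode k (F v) = 2"
  shows "\<exists>p\<in>V. X (F p) < X (F v)
    \<and> X (F v) \<le> X (F p) + 1 + card {z\<in>V. X (F p) < X (F z) \<and> X (F z) < X (F v)}"
proof -
  obtain w where vw: "E v w" and ident_w: "ident w = chain_relay k (F v)"
    using checks v mode unfolding chain_check_def bex_view by auto
  have w: "w \<in> V" using vw edge_in_V2 by blast
  have "\<forall>p\<in>view w. chain_mode k (snd p) = 2 \<and> chain_relay k (snd p) = ident w \<longrightarrow>
      (\<exists>q\<in>view w. fst q = chain_pred k (snd p) \<and> X (snd q) < X (snd p) \<and>
        chain_far_target k (snd q) = X (snd p) \<and> X (snd p) = X (snd q) + 1 + chain_far_count k (snd q))"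
    using checks w unfolding chain_check_def by blast
  then have "\<exists>q\<in>view w. X (snd q) < X (F v) \<and> chain_far_target k (snd q) = X (F v)
      \<and> X (F v) = X (snd q) + 1 + chain_far_count k (snd q)"
    unfolding ball_view using edge_sym[OF vw] mode ident_w by fastforce
  then obtain p where wp: "E w p" and p_below: "X (F p) < X (F v)"
    and target: "chain_far_target k (F p) = X (F v)"
    and gap: "X (F v) = X (F p) + 1 + chain_far_count k (F p)"
    unfolding bex_view by auto
  have p: "p \<in> V" using wp edge_in_V2 by blast
  have "chain_far_count k (F p) = card {z. E p z \<and> X (F p) < X (F z) \<and> X (F z) < X (F v)}"
    using checks p target unfolding chain_check_def card_view by auto
  also have "\<dots> \<le> card {z\<in>V. X (F p) < X (F z) \<and> X (F z) < X (F v)}"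
    using fin edge_in_V2 by (intro card_mono) auto
  finally have "X (F v) \<le> X (F p) + 1 + card {z\<in>V. X (F p) < X (F z) \<and> X (F z) < X (F v)}"
    using gap by linarith
  then show ?thesis using p p_below by blast
qed

lemma bij_betw_positions:
  assumes checks: "\<forall>v\<in>V. chain_check (ident v) (F v) (view v) X Y k"
    and sum: "2 * (\<Sum>v\<in>V. X (F v)) = card V * (card V - 1)"
  shows "bij_betw (\<lambda>v. X (F v)) V {0..<card V}"
proof (rule bij_betw_interval_if_rank_bounded[OF fin _ sum], intro ballI)
  have "\<forall>v\<in>V. X (F v) \<noteq> 0 \<longrightarrow> (\<exists>p\<in>V. X (F p) < X (F v)
      \<and> X (F v) \<le> X (F p) + 1 + card {z\<in>V. X (F p) < X (F z) \<and> X (F z) < X (F v)})"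
  proof (intro ballI impI)
    fix v assume v: "v \<in> V" and "X (F v) \<noteq> 0"
    then have "chain_mode k (F v) = 1 \<or> chain_mode k (F v) = 2"
      using checks unfolding chain_check_def by fastforce
    then show "\<exists>p\<in>V. X (F p) < X (F v)
        \<and> X (F v) \<le> X (F p) + 1 + card {z\<in>V. X (F p) < X (F z) \<and> X (F z) < X (F v)}"
      using chain_step_near[OF checks v] chain_step_far[OF checks v] by blast
  qed
  then show "X (F v) \<le> card {z\<in>V. X (F z) < X (F v)}" if "v \<in> V" for v
    by (rule rank_lower_bound_from_steps[OF fin _ that])
qed

end

locale accepting_labelling = labelled_network +
  assumes accepts: "\<forall>v\<in>V. local_check (ident v) (F v) (view v)"
begin

definition is_root :: "nat \<Rightarrow> bool" where
  "is_root u \<longleftrightarrow> ident u = root_id (F u)"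

definition tree_parent :: "nat \<Rightarrow> nat" where
  "tree_parent u = (THE w. E u w \<and> ident w = parent_id (F u))"

lemma local_checkD:
  assumes "v \<in> V"
  shows "\<forall>p\<in>view v. root_id (snd p) = root_id (F v)"
    and "is_root v \<Longrightarrow> 2 * subtree_sum_x (F v) = subtree_size (F v) * (subtree_size (F v) - 1)"
    and "is_root v \<Longrightarrow> 2 * subtree_sum_y (F v) = subtree_size (F v) * (subtree_size (F v) - 1)"
    and "\<not> is_root v \<Longrightarrow> \<exists>p\<in>view v. fst p = parent_id (F v)"
    and "subtree_size (F v) = 1 + (\<Sum>p\<in>tree_children (ident v) (view v). subtree_size (snd p))"
    and "subtree_sum_x (F v) = pos_x (F v) + (\<Sum>p\<in>tree_children (ident v) (view v). subtree_sum_x (snd p))"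
    and "subtree_sum_y (F v) = pos_y (F v) + (\<Sum>p\<in>tree_children (ident v) (view v). subtree_sum_y (snd p))"
    and "\<forall>p\<in>view v. discordant pos_x pos_y (F v) (snd p)"
    and "int (card {p\<in>view v. pos_x (snd p) < pos_x (F v)}) - int (card {p\<in>view v. pos_x (F v) < pos_x (snd p)})
      = int (pos_x (F v)) - int (pos_y (F v))"
    and "chain_check (ident v) (F v) (view v) pos_x pos_y 7"
    and "chain_check (ident v) (F v) (view v) pos_y pos_x 13"
  using accepts assms unfolding local_check_def is_root_def by (auto simp only: split: if_split_asm)

lemma root_id_constant: "u \<in> V \<Longrightarrow> v \<in> V \<Longrightarrow> root_id (F u) = root_id (F v)"
proof (rule constant_if_edge_invariant[where g = "\<lambda>u. root_id (F u)"], intro allI impI)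
  fix a b assume "E a b"
  then show "root_id (F a) = root_id (F b)"
    using local_checkD(1)[OF edge_in_V1] unfolding ball_view by force
qed

lemma tree_parent_edge:
  assumes u: "u \<in> V" and not_root: "\<not> is_root u"
  shows "E u (tree_parent u) \<and> ident (tree_parent u) = parent_id (F u)"
proof -
  obtain w where w: "E u w" "ident w = parent_id (F u)"
    using local_checkD(4)[OF u not_root] unfolding bex_view by auto
  show ?thesis
    unfolding tree_parent_def
  proof (rule theI[of _ w])
    show "E u w \<and> ident w = parent_id (F u)" using w by simp
    show "w' = w" if "E u w' \<and> ident w' = parent_id (F u)" for w'
      using that w ident_eq_iff[of w' w] edge_in_V2[of u w'] edge_in_V2[OF w(1)] by simp
  qed
qed

lemma sum_tree_children:
  assumes v: "v \<in> V"
  shows "(\<Sum>p\<in>tree_children (ident v) (view v). h (snd p))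
    = (\<Sum>u\<in>{u\<in>V. \<not> is_root u \<and> tree_parent u = v}. h (F u))"
proof -
  have "{u. E v u \<and> parent_id (F u) = ident v \<and> ident u \<noteq> root_id (F u)}
      = {u\<in>V. \<not> is_root u \<and> tree_parent u = v}"
  proof (intro equalityI subsetI)
    fix u assume "u \<in> {u. E v u \<and> parent_id (F u) = ident v \<and> ident u \<noteq> root_id (F u)}"
    then have vu: "E v u" and "parent_id (F u) = ident v" and not_root: "\<not> is_root u"
      unfolding is_root_def by auto
    moreover have u: "u \<in> V" using vu edge_in_V2 by blast
    ultimately show "u \<in> {u\<in>V. \<not> is_root u \<and> tree_parent u = v}"
      using tree_parent_edge[OF u not_root] ident_eq_iff v edge_in_V2 by auto
  next
    fix u assume "u \<in> {u\<in>V. \<not> is_root u \<and> tree_parent u = v}"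
    then show "u \<in> {u. E v u \<and> parent_id (F u) = ident v \<and> ident u \<noteq> root_id (F u)}"
      using tree_parent_edge edge_sym unfolding is_root_def by auto
  qed
  then show ?thesis
    using sum_view[where v = v and P = "\<lambda>p. parent_id (snd p) = ident v \<and> fst p \<noteq> root_id (snd p)"]
    unfolding tree_children_def by simp
qed

lemma root_sums:
  obtains rt where "rt \<in> V" "is_root rt"
    "subtree_size (F rt) = card V"
    "subtree_sum_x (F rt) = (\<Sum>v\<in>V. pos_x (F v))"
    "subtree_sum_y (F rt) = (\<Sum>v\<in>V. pos_y (F v))"
proof -
  have parent_in: "\<forall>u\<in>V. \<not> is_root u \<longrightarrow> tree_parent u \<in> V"
    using tree_parent_edge edge_in_V2 by blast
  have tree_sum: "(\<Sum>u\<in>{u\<in>V. is_root u}. s (F u)) = (\<Sum>v\<in>V. g v)"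
    if "\<And>v. v \<in> V \<Longrightarrow> s (F v) = g v + (\<Sum>p\<in>tree_children (ident v) (view v). s (snd p))"
    for s :: "nat list \<Rightarrow> nat" and g
  proof (rule sum_roots_of_forest[OF fin parent_in], intro ballI)
    fix v assume v: "v \<in> V"
    show "s (F v) = g v + (\<Sum>u\<in>{u\<in>V. \<not> is_root u \<and> tree_parent u = v}. s (F u))"
      using that[OF v] sum_tree_children[OF v, of s] by simp
  qed
  have size: "(\<Sum>u\<in>{u\<in>V. is_root u}. subtree_size (F u)) = (\<Sum>v\<in>V. 1)"
    using local_checkD(5) by (intro tree_sum) simp
  have sum_x: "(\<Sum>u\<in>{u\<in>V. is_root u}. subtree_sum_x (F u)) = (\<Sum>v\<in>V. pos_x (F v))"
    using local_checkD(6) by (intro tree_sum) simp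
  have sum_y: "(\<Sum>u\<in>{u\<in>V. is_root u}. subtree_sum_y (F u)) = (\<Sum>v\<in>V. pos_y (F v))"
    using local_checkD(7) by (intro tree_sum) simp
  have "{u\<in>V. is_root u} \<noteq> {}"
  proof
    assume no_root: "{u\<in>V. is_root u} = {}"
    have "card V = 0" using size unfolding no_root by simp
    then show False using fin nonempty by simp
  qed
  then obtain rt where rt: "rt \<in> V" "is_root rt" by blast
  have "u = rt" if "u \<in> V" "is_root u" for u
    using that rt root_id_constant[OF that(1) rt(1)] ident_eq_iff[OF that(1) rt(1)]
    unfolding is_root_def by simp
  then have roots: "{u\<in>V. is_root u} = {rt}" using rt by blast
  show ?thesis by (rule that[OF rt]) (use size sum_x sum_y in \<open>simp_all add: roots\<close>)
qed

lemma permutation_graph: "is_permutation_graph V E"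
proof -
  define x where "x v = pos_x (F v)" for v
  define y where "y v = pos_y (F v)" for v
  obtain rt where rt: "rt \<in> V" "is_root rt" "subtree_size (F rt) = card V"
    "subtree_sum_x (F rt) = (\<Sum>v\<in>V. pos_x (F v))" "subtree_sum_y (F rt) = (\<Sum>v\<in>V. pos_y (F v))"
    by (rule root_sums)
  have "2 * (\<Sum>v\<in>V. pos_x (F v)) = card V * (card V - 1)"
    using local_checkD(2)[OF rt(1,2)] rt(3,4) by simp
  then have bij_x: "bij_betw x V {0..<card V}"
    unfolding x_def by (rule bij_betw_positions[rotated]) (use local_checkD(10) in blast)
  have "2 * (\<Sum>v\<in>V. pos_y (F v)) = card V * (card V - 1)"
    using local_checkD(3)[OF rt(1,2)] rt(3,5) by simp
  then have bij_y: "bij_betw y V {0..<card V}"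
    unfolding y_def by (rule bij_betw_positions[rotated]) (use local_checkD(11) in blast)
  have edges: "\<forall>u v. E u v \<longrightarrow> discordant x y u v"
  proof (intro allI impI)
    fix u v assume "E u v"
    then have "discordant pos_x pos_y (F u) (F v)"
      using local_checkD(8)[OF edge_in_V1] unfolding ball_view by simp
    then show "discordant x y u v" unfolding x_def y_def discordant_def .
  qed
  have balanced: "\<forall>v\<in>V. int (card {u. E v u \<and> x u < x v}) - int (card {u. E v u \<and> x v < x u})
      = int (x v) - int (y v)"
    using local_checkD(9) unfolding card_view x_def y_def by simp
  have "E u v \<longleftrightarrow> discordant x y u v" if "u \<in> V" "v \<in> V" for u v
    using discordant_imp_edge[OF fin bij_x bij_y sym edges balanced that] edges by blast
  then show ?thesis
    unfolding is_permutation_graph_iff_discordant_rankings using bij_x bij_y by blast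
qed

end

lemma soundness:
  assumes net: "network c V E ident" and accept: "all_accept perm_verifier V E ident cert"
  shows "is_permutation_graph V E"
proof -
  define F where "F u = the (nats_decode 19 (cert u))" for u
  interpret labelled_network V E ident F
    using net unfolding network_def simple_graph_def connected_graph_def
    by unfold_locales auto
  have "local_check (ident v) (F v) (view v)" if v: "v \<in> V" for v
  proof -
    have "perm_verifier (ident v) (cert v) ((\<lambda>u. (ident u, cert u)) ` {u. E v u})"
      using accept v unfolding all_accept_def by (simp add: setcompr_eq_image)
    moreover have "(\<lambda>p. (fst p, the (nats_decode 19 (snd p)))) ` (\<lambda>u. (ident u, cert u)) ` {u. E v u}
        = view v"
      unfolding view_def F_def by (simp add: image_image)
    ultimately show ?thesis
      unfolding perm_verifier_def F_def by (auto split: option.splits)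
  qed
  then interpret accepting_labelling V E ident F
    by unfold_locales blast
  show ?thesis by (rule permutation_graph)
qed

section \<open>Completeness: the honest chain data\<close>

definition chain_mode_of :: "(nat \<Rightarrow> nat \<Rightarrow> bool) \<Rightarrow> (nat \<Rightarrow> nat) \<Rightarrow> nat \<Rightarrow> nat" where
  "chain_mode_of E A v = (if A v = 0 then 0 else if \<exists>u. E v u \<and> A u < A v then 1 else 2)"

definition near_pred :: "(nat \<Rightarrow> nat \<Rightarrow> bool) \<Rightarrow> (nat \<Rightarrow> nat) \<Rightarrow> nat \<Rightarrow> nat" where
  "near_pred E A v = (SOME u. E v u \<and> A u < A v)"

definition far_pred :: "nat set \<Rightarrow> (nat \<Rightarrow> nat) \<Rightarrow> (nat \<Rightarrow> nat) \<Rightarrow> nat \<Rightarrow> nat" where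
  "far_pred V A B v = (SOME p. p \<in> V \<and> A p < A v \<and> (\<forall>z\<in>V. A z < A v \<longrightarrow> B z \<le> B p))"

definition far_relay :: "nat set \<Rightarrow> (nat \<Rightarrow> nat \<Rightarrow> bool) \<Rightarrow> (nat \<Rightarrow> nat) \<Rightarrow> (nat \<Rightarrow> nat) \<Rightarrow> nat \<Rightarrow> nat" where
  "far_relay V E A B v = (SOME w. E v w \<and> E (far_pred V A B v) w)"

definition chain_pred_of ::
    "nat set \<Rightarrow> (nat \<Rightarrow> nat \<Rightarrow> bool) \<Rightarrow> (nat \<Rightarrow> nat) \<Rightarrow> (nat \<Rightarrow> nat) \<Rightarrow> (nat \<Rightarrow> nat) \<Rightarrow> nat \<Rightarrow> nat"
  where
  "chain_pred_of V E ident A B v =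
    (if chain_mode_of E A v = 1 then ident (near_pred E A v)
     else if chain_mode_of E A v = 2 then ident (far_pred V A B v) else 0)"

definition chain_relay_of ::
    "nat set \<Rightarrow> (nat \<Rightarrow> nat \<Rightarrow> bool) \<Rightarrow> (nat \<Rightarrow> nat) \<Rightarrow> (nat \<Rightarrow> nat) \<Rightarrow> (nat \<Rightarrow> nat) \<Rightarrow> nat \<Rightarrow> nat"
  where
  "chain_relay_of V E ident A B v =
    (if chain_mode_of E A v = 2 then ident (far_relay V E A B v) else 0)"

definition near_count_of :: "(nat \<Rightarrow> nat \<Rightarrow> bool) \<Rightarrow> (nat \<Rightarrow> nat) \<Rightarrow> (nat \<Rightarrow> nat) \<Rightarrow> nat \<Rightarrow> nat" where
  "near_count_of E A B v =
    (if chain_mode_of E A v = 1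
     then card {u. E v u \<and> A (near_pred E A v) < A u \<and> A u < A v \<and> B v < B u} else 0)"

text \<open>A node is the far predecessor of at most one node (\<open>far_pred_inj\<close> below), whose
  position it announces.\<close>

definition far_target_of :: "nat set \<Rightarrow> (nat \<Rightarrow> nat \<Rightarrow> bool) \<Rightarrow> (nat \<Rightarrow> nat) \<Rightarrow> (nat \<Rightarrow> nat) \<Rightarrow> nat \<Rightarrow> nat" where
  "far_target_of V E A B p =
    (if \<exists>v\<in>V. chain_mode_of E A v = 2 \<and> far_pred V A B v = p
     then A (SOME v. v \<in> V \<and> chain_mode_of E A v = 2 \<and> far_pred V A B v = p) else 0)"

definition far_count_of :: "nat set \<Rightarrow> (nat \<Rightarrow> nat \<Rightarrow> bool) \<Rightarrow> (nat \<Rightarrow> nat) \<Rightarrow> (nat \<Rightarrow> nat) \<Rightarrow> nat \<Rightarrow> nat" where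
  "far_count_of V E A B p = card {u. E p u \<and> A p < A u \<and> A u < far_target_of V E A B p}"

lemma rtranclp_crossing_edge:
  assumes "R\<^sup>*\<^sup>* a b" "Q a" "\<not> Q b"
  shows "\<exists>u w. R u w \<and> Q u \<and> \<not> Q w"
  using assms by (induction rule: rtranclp_induct) auto

locale discordance_model = labelled_network +
  fixes A B :: "nat \<Rightarrow> nat"
  assumes bij_A: "bij_betw A V {0..<card V}" and bij_B: "bij_betw B V {0..<card V}"
    and edge: "\<forall>u v. E u v \<longleftrightarrow> u \<in> V \<and> v \<in> V \<and> discordant A B u v"
begin

lemma inj_A: "inj_on A V" using bij_A by (simp add: bij_betw_def)
lemma inj_B: "inj_on B V" using bij_B by (simp add: bij_betw_def)
lemma A_less: "v \<in> V \<Longrightarrow> A v < card V" using bij_A by (auto simp: bij_betw_def)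
lemma B_less: "v \<in> V \<Longrightarrow> B v < card V" using bij_B by (auto simp: bij_betw_def)

lemma A_inj: "u \<in> V \<Longrightarrow> v \<in> V \<Longrightarrow> A u = A v \<Longrightarrow> u = v"
  using inj_A by (simp add: inj_on_eq_iff)

lemma B_inj: "u \<in> V \<Longrightarrow> v \<in> V \<Longrightarrow> B u = B v \<Longrightarrow> u = v"
  using inj_B by (simp add: inj_on_eq_iff)

lemma edge_iff:
  "E u v \<longleftrightarrow> u \<in> V \<and> v \<in> V \<and> ((A u < A v \<and> B v < B u) \<or> (A v < A u \<and> B u < B v))"
  using edge unfolding discordant_def by blast

lemma card_between_ranks:
  assumes uV: "u \<in> V" and vV: "v \<in> V" and lt: "A u < A v"
  shows "card {z\<in>V. A u < A z \<and> A z < A v} = A v - A u - 1"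
proof -
  have "A ` {z\<in>V. A u < A z \<and> A z < A v} = {A u<..<A v}"
  proof (intro equalityI subsetI)
    fix k assume "k \<in> {A u<..<A v}"
    then have k: "A u < k" "k < A v" by auto
    then have "k \<in> {0..<card V}" using A_less[OF vV] by simp
    then have "k \<in> A ` V" using bij_A unfolding bij_betw_def by simp
    then obtain z where "z \<in> V" "A z = k" by blast
    then show "k \<in> A ` {z\<in>V. A u < A z \<and> A z < A v}" using k by auto
  qed auto
  moreover have "inj_on A {z\<in>V. A u < A z \<and> A z < A v}" using inj_A by (rule inj_on_subset) auto
  then have "card (A ` {z\<in>V. A u < A z \<and> A z < A v}) = card {z\<in>V. A u < A z \<and> A z < A v}"
    by (rule card_image)
  ultimately show ?thesis by simp
qed

lemma chain_mode_of_le: "chain_mode_of E A v \<le> 2" unfolding chain_mode_of_def by simp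
lemma chain_mode_of_eq_0: "chain_mode_of E A v = 0 \<longleftrightarrow> A v = 0" unfolding chain_mode_of_def by simp

lemma near_pred_edge:
  assumes "chain_mode_of E A v = 1"
  shows "E v (near_pred E A v) \<and> A (near_pred E A v) < A v"
proof -
  have "\<exists>u. E v u \<and> A u < A v" using assms unfolding chain_mode_of_def by (auto split: if_splits)
  then show ?thesis unfolding near_pred_def by (rule someI_ex)
qed

lemma chain_mode_of_eq_2: "chain_mode_of E A v = 2 \<longleftrightarrow> A v \<noteq> 0 \<and> \<not> (\<exists>u. E v u \<and> A u < A v)"
  unfolding chain_mode_of_def by simp

lemma far_pred_max:
  assumes vV: "v \<in> V" and pos: "A v \<noteq> 0"
  shows "far_pred V A B v \<in> V \<and> A (far_pred V A B v) < A v
    \<and> (\<forall>z\<in>V. A z < A v \<longrightarrow> B z \<le> B (far_pred V A B v))"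
proof -
  define P where "P = {z\<in>V. A z < A v}"
  have "0 \<in> {0..<card V}" using A_less[OF vV] by simp
  then obtain z0 where "z0 \<in> V" "A z0 = 0" using bij_A unfolding bij_betw_def by (metis imageE)
  then have "z0 \<in> P" using pos unfolding P_def by simp
  then have neP: "P \<noteq> {}" by auto
  have finite_P: "finite P" using fin unfolding P_def by simp
  have "Max (B ` P) \<in> B ` P" using finite_P neP by simp
  then obtain p where p: "p \<in> P" "B p = Max (B ` P)" by (metis imageE)
  have "\<forall>z\<in>P. B z \<le> B p" using p finite_P by simp
  then have "p \<in> V \<and> A p < A v \<and> (\<forall>z\<in>V. A z < A v \<longrightarrow> B z \<le> B p)" using p(1) unfolding P_def by simp
  then show ?thesis unfolding far_pred_def by (rule someI)
qed

lemma far_pred_below: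
  assumes vV: "v \<in> V" and c: "chain_mode_of E A v = 2"
  shows "B (far_pred V A B v) < B v"
proof -
  define p where "p = far_pred V A B v"
  have pos: "A v \<noteq> 0" using c chain_mode_of_eq_2 by blast
  have p: "p \<in> V" "A p < A v" using far_pred_max[OF vV pos] unfolding p_def by auto
  have "\<not> E v p" using c p(2) chain_mode_of_eq_2 by blast
  then have "\<not> (B v < B p)" using edge_iff vV p by blast
  moreover have "B p \<noteq> B v" using B_inj p vV by (metis less_irrefl)
  ultimately show ?thesis unfolding p_def by simp
qed

text \<open>Along a path from the far predecessor \<open>p\<close> to \<open>v\<close> some edge \<open>a b\<close> leaves the nodes
  left of \<open>v\<close>; as \<open>B b < B a \<le> B p < B v\<close>, the node \<open>b\<close> is adjacent to both \<open>v\<close> and \<open>p\<close>.\<close>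

lemma far_relay_edges:
  assumes vV: "v \<in> V" and c: "chain_mode_of E A v = 2"
  shows "E v (far_relay V E A B v) \<and> E (far_pred V A B v) (far_relay V E A B v)"
proof -
  define p where "p = far_pred V A B v"
  have pos: "A v \<noteq> 0" using c chain_mode_of_eq_2 by blast
  have p: "p \<in> V" "A p < A v" "\<forall>z\<in>V. A z < A v \<longrightarrow> B z \<le> B p"
    using far_pred_max[OF vV pos] unfolding p_def by auto
  have Bp: "B p < B v" using far_pred_below[OF vV c] unfolding p_def .
  have "E\<^sup>*\<^sup>* p v" using conn p(1) vV by simp
  then obtain a b where ab: "E a b" "a \<in> V \<and> A a < A v" "\<not> (b \<in> V \<and> A b < A v)"
    using rtranclp_crossing_edge[of E p v "\<lambda>z. z \<in> V \<and> A z < A v"] p by auto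
  have bV: "b \<in> V" using ab(1) edge_in_V2 by blast
  have Ab: "A v \<le> A b" using ab(3) bV by simp
  have Aab: "A a < A b" using ab(2) Ab by simp
  have Bab: "B b < B a" using edge_iff ab(1) Aab by auto
  have bv: "b \<noteq> v"
  proof
    assume "b = v"
    then have "E v a" using ab(1) edge_sym by simp
    then show False using c ab(2) chain_mode_of_eq_2 by blast
  qed
  have Abv: "A v < A b" using Ab bv A_inj bV vV by (metis le_neq_implies_less)
  have Bba: "B a \<le> B p" using p(3) ab(2) by simp
  have "E v b" using edge_iff vV bV Abv Bab Bba Bp by simp
  moreover have "E p b" using edge_iff p(1) bV p(2) Abv Bab Bba by simp
  ultimately have "\<exists>w. E v w \<and> E p w" by blast
  then show ?thesis unfolding far_relay_def p_def by (rule someI_ex)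
qed

lemma far_pred_inj:
  assumes aV: "a \<in> V" and bV: "b \<in> V"
    and ca: "chain_mode_of E A a = 2" and cb: "chain_mode_of E A b = 2"
    and eq: "far_pred V A B a = far_pred V A B b"
  shows "a = b"
proof (rule ccontr)
  assume ne: "a \<noteq> b"
  have "A a \<noteq> A b" using ne A_inj aV bV by blast
  then consider "A a < A b" | "A b < A a" by linarith
  then show False
  proof cases
    case 1
    have "B a \<le> B (far_pred V A B b)" using far_pred_max[OF bV] cb chain_mode_of_eq_2 aV 1 by blast
    moreover have "B (far_pred V A B a) < B a" using far_pred_below[OF aV ca] .
    ultimately show False using eq by simp
  next
    case 2
    have "B b \<le> B (far_pred V A B a)" using far_pred_max[OF aV] ca chain_mode_of_eq_2 bV 2 by blast
    moreover have "B (far_pred V A B b) < B b" using far_pred_below[OF bV cb] .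
    ultimately show False using eq by simp
  qed
qed

lemma far_target_of_far_pred:
  assumes vV: "v \<in> V" and c: "chain_mode_of E A v = 2"
  shows "far_target_of V E A B (far_pred V A B v) = A v"
proof -
  have ex: "\<exists>v'\<in>V. chain_mode_of E A v' = 2 \<and> far_pred V A B v' = far_pred V A B v"
    using vV c by blast
  define v' where
    "v' = (SOME v'. v' \<in> V \<and> chain_mode_of E A v' = 2 \<and> far_pred V A B v' = far_pred V A B v)"
  have v': "v' \<in> V \<and> chain_mode_of E A v' = 2 \<and> far_pred V A B v' = far_pred V A B v"
    unfolding v'_def by (rule someI_ex) (use ex in blast)
  then have "v' = v" using far_pred_inj vV c by blast
  then show ?thesis unfolding far_target_of_def using ex v'_def by simp
qed

text \<open>A node strictly between \<open>p = near_pred E A s\<close> and \<open>s\<close> in \<open>A\<close> is a neighbour of \<open>s\<close> if it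
  lies above \<open>s\<close> in \<open>B\<close>, and a neighbour of \<open>p\<close> otherwise, because \<open>B s < B p\<close>.\<close>

lemma near_pred_gap:
  assumes sV: "s \<in> V" and c: "chain_mode_of E A s = 1"
  shows "A s = A (near_pred E A s) + 1 + near_count_of E A B s
    + card {z. E (near_pred E A s) z \<and> A (near_pred E A s) < A z \<and> A z < A s \<and> B z < B s}"
proof -
  define p where "p = near_pred E A s"
  have pp: "E s p" "A p < A s" using near_pred_edge[OF c] unfolding p_def by auto
  have pV: "p \<in> V" using pp(1) edge_in_V2 by blast
  have Bps: "B s < B p" using edge_iff pp by auto
  define S1 where "S1 = {z. E s z \<and> A p < A z \<and> A z < A s \<and> B s < B z}"
  define S2 where "S2 = {z. E p z \<and> A p < A z \<and> A z < A s \<and> B z < B s}"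
  have eq: "{z\<in>V. A p < A z \<and> A z < A s} = S1 \<union> S2"
  proof (intro equalityI subsetI)
    fix z assume z: "z \<in> {z\<in>V. A p < A z \<and> A z < A s}"
    then have zV: "z \<in> V" and a1: "A p < A z" and a2: "A z < A s" by auto
    have "z \<noteq> s" using a2 by auto
    then have "B z \<noteq> B s" using B_inj zV sV by blast
    then consider "B s < B z" | "B z < B s" by linarith
    then show "z \<in> S1 \<union> S2"
    proof cases
      case 1 then have "E s z" using edge_iff sV zV a2 by simp
      then show ?thesis using 1 a1 a2 unfolding S1_def by simp
    next
      case 2 then have "E p z" using edge_iff pV zV a1 Bps by simp
      then show ?thesis using 2 a1 a2 unfolding S2_def by simp
    qed
  next
    fix z assume "z \<in> S1 \<union> S2"
    then show "z \<in> {z\<in>V. A p < A z \<and> A z < A s}" unfolding S1_def S2_def using edge_in_V2 by auto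
  qed
  have f1: "finite S1" unfolding S1_def by (rule finite_neighbours)
  have f2: "finite S2" unfolding S2_def by (rule finite_neighbours)
  have dj: "S1 \<inter> S2 = {}" unfolding S1_def S2_def by auto
  have "A s - A p - 1 = card S1 + card S2"
    using card_between_ranks[OF pV sV pp(2)] eq card_Un_disjoint[OF f1 f2 dj] by simp
  moreover have "near_count_of E A B s = card S1" unfolding near_count_of_def S1_def p_def using c by simp
  ultimately show ?thesis using pp(2) unfolding S2_def p_def by simp
qed

lemma far_pred_gap:
  assumes vV: "v \<in> V" and c: "chain_mode_of E A v = 2"
  shows "A v = A (far_pred V A B v) + 1 + far_count_of V E A B (far_pred V A B v)"
proof -
  define p where "p = far_pred V A B v"
  have pos: "A v \<noteq> 0" using c chain_mode_of_eq_2 by blast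
  have p: "p \<in> V" "A p < A v" "\<forall>z\<in>V. A z < A v \<longrightarrow> B z \<le> B p"
    using far_pred_max[OF vV pos] unfolding p_def by auto
  have fx: "far_target_of V E A B p = A v" using far_target_of_far_pred[OF vV c] unfolding p_def .
  have eq: "{z\<in>V. A p < A z \<and> A z < A v} = {z. E p z \<and> A p < A z \<and> A z < A v}"
  proof (intro equalityI subsetI)
    fix z assume z: "z \<in> {z\<in>V. A p < A z \<and> A z < A v}"
    then have zV: "z \<in> V" and a1: "A p < A z" and a2: "A z < A v" by auto
    have "B z \<le> B p" using p(3) zV a2 by simp
    moreover have "z \<noteq> p" using a1 by auto
    then have "B z \<noteq> B p" using B_inj zV p(1) by blast
    ultimately have "B z < B p" by simp
    then have "E p z" using edge_iff p(1) zV a1 by simp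
    then show "z \<in> {z. E p z \<and> A p < A z \<and> A z < A v}" using a1 a2 by simp
  next
    fix z assume "z \<in> {z. E p z \<and> A p < A z \<and> A z < A v}"
    then show "z \<in> {z\<in>V. A p < A z \<and> A z < A v}" using edge_in_V2 by auto
  qed
  have "far_count_of V E A B p = card {z. E p z \<and> A p < A z \<and> A z < A v}" unfolding far_count_of_def fx ..
  then have "far_count_of V E A B p = A v - A p - 1" using card_between_ranks[OF p(1) vV p(2)] eq by simp
  then show ?thesis using p(2) unfolding p_def by simp
qed

end

locale honest_chain = discordance_model +
  fixes X Y :: "nat list \<Rightarrow> nat" and k :: nat
  assumes X_label: "u \<in> V \<Longrightarrow> X (F u) = A u" and Y_label: "u \<in> V \<Longrightarrow> Y (F u) = B u"
    and mode_label: "u \<in> V \<Longrightarrow> chain_mode k (F u) = chain_mode_of E A u"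
    and pred_label: "u \<in> V \<Longrightarrow> chain_pred k (F u) = chain_pred_of V E ident A B u"
    and relay_label: "u \<in> V \<Longrightarrow> chain_relay k (F u) = chain_relay_of V E ident A B u"
    and near_count_label: "u \<in> V \<Longrightarrow> chain_near_count k (F u) = near_count_of E A B u"
    and far_target_label: "u \<in> V \<Longrightarrow> chain_far_target k (F u) = far_target_of V E A B u"
    and far_count_label: "u \<in> V \<Longrightarrow> chain_far_count k (F u) = far_count_of V E A B u"
begin

lemma honest_near_pred:
  assumes v: "v \<in> V" and mode: "chain_mode k (F v) = 1"
  shows "\<exists>p\<in>view v. fst p = chain_pred k (F v) \<and> X (snd p) < X (F v) \<and>
    chain_near_count k (F v) = card {q\<in>view v. X (snd p) < X (snd q) \<and> X (snd q) < X (F v) \<and> Y (F v) < Y (snd q)}"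
proof -
  have m: "chain_mode_of E A v = 1" using mode mode_label[OF v] by simp
  define u where "u = near_pred E A v"
  have vu: "E v u" and u_below: "A u < A v" using near_pred_edge[OF m] unfolding u_def by auto
  have u: "u \<in> V" using vu edge_in_V2 by blast
  have "{w. E v w \<and> X (F u) < X (F w) \<and> X (F w) < X (F v) \<and> Y (F v) < Y (F w)}
      = {w. E v w \<and> A u < A w \<and> A w < A v \<and> B v < B w}"
    using X_label Y_label edge_in_V2 u v by auto
  then have "chain_near_count k (F v)
      = card {w. E v w \<and> X (F u) < X (F w) \<and> X (F w) < X (F v) \<and> Y (F v) < Y (F w)}"
    using near_count_label[OF v] m unfolding near_count_of_def u_def by simp
  moreover have "ident u = chain_pred k (F v)"
    using pred_label[OF v] m unfolding chain_pred_of_def u_def by simp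
  moreover have "X (F u) < X (F v)" using u_below X_label u v by simp
  ultimately show ?thesis unfolding bex_view card_view using vu by auto
qed

lemma honest_relay:
  assumes v: "v \<in> V" and mode: "chain_mode k (F v) = 2"
  shows "\<exists>p\<in>view v. fst p = chain_relay k (F v)"
proof -
  have m: "chain_mode_of E A v = 2" using mode mode_label[OF v] by simp
  have "E v (far_relay V E A B v)" using far_relay_edges[OF v m] by simp
  moreover have "ident (far_relay V E A B v) = chain_relay k (F v)"
    using relay_label[OF v] m unfolding chain_relay_of_def by simp
  ultimately show ?thesis unfolding bex_view by auto
qed

lemma honest_near_gap:
  assumes v: "v \<in> V" and vs: "E v s"
    and mode: "chain_mode k (F s) = 1" and pred: "chain_pred k (F s) = ident v"
  shows "X (F s) = X (F v) + 1 + chain_near_count k (F s)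
    + card {q\<in>view v. X (F v) < X (snd q) \<and> X (snd q) < X (F s) \<and> Y (snd q) < Y (F s)}"
proof -
  have s: "s \<in> V" using vs edge_in_V2 by blast
  have m: "chain_mode_of E A s = 1" using mode mode_label[OF s] by simp
  have "ident (near_pred E A s) = ident v" using pred pred_label[OF s] m unfolding chain_pred_of_def by simp
  moreover have "near_pred E A s \<in> V" using near_pred_edge[OF m] edge_in_V2 by blast
  ultimately have "near_pred E A s = v" using ident_eq_iff v by blast
  then have "A s = A v + 1 + near_count_of E A B s + card {z. E v z \<and> A v < A z \<and> A z < A s \<and> B z < B s}"
    using near_pred_gap[OF s m] by simp
  moreover have "{u. E v u \<and> X (F v) < X (F u) \<and> X (F u) < X (F s) \<and> Y (F u) < Y (F s)}
      = {z. E v z \<and> A v < A z \<and> A z < A s \<and> B z < B s}"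
    using X_label Y_label edge_in_V2 s v by auto
  ultimately show ?thesis
    unfolding card_view using X_label[OF s] X_label[OF v] near_count_label[OF s] by simp
qed

lemma honest_far_count:
  assumes v: "v \<in> V"
  shows "chain_far_count k (F v) = card {q\<in>view v. X (F v) < X (snd q) \<and> X (snd q) < chain_far_target k (F v)}"
proof -
  have "{u. E v u \<and> X (F v) < X (F u) \<and> X (F u) < chain_far_target k (F v)}
      = {u. E v u \<and> A v < A u \<and> A u < far_target_of V E A B v}"
    using X_label far_target_label v edge_in_V2 by auto
  then show ?thesis unfolding card_view far_count_label[OF v] far_count_of_def by simp
qed

lemma honest_far_gap:
  assumes v: "v \<in> V" and vs: "E v s"
    and mode: "chain_mode k (F s) = 2" and relay: "chain_relay k (F s) = ident v"
  shows "\<exists>q\<in>view v. fst q = chain_pred k (F s) \<and> X (snd q) < X (F s) \<and>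
    chain_far_target k (snd q) = X (F s) \<and> X (F s) = X (snd q) + 1 + chain_far_count k (snd q)"
proof -
  have s: "s \<in> V" using vs edge_in_V2 by blast
  have m: "chain_mode_of E A s = 2" using mode mode_label[OF s] by simp
  have relay_edges: "E s (far_relay V E A B s) \<and> E (far_pred V A B s) (far_relay V E A B s)"
    using far_relay_edges[OF s m] .
  have "ident (far_relay V E A B s) = ident v"
    using relay relay_label[OF s] m unfolding chain_relay_of_def by simp
  then have "far_relay V E A B s = v" using ident_eq_iff v relay_edges edge_in_V2 by blast
  moreover define q where "q = far_pred V A B s"
  ultimately have vq: "E v q" using relay_edges edge_sym by blast
  have q: "q \<in> V" using vq edge_in_V2 by blast
  have "A q < A s" using far_pred_max[OF s] m chain_mode_of_eq_2 unfolding q_def by blast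
  moreover have "ident q = chain_pred k (F s)"
    using pred_label[OF s] m unfolding chain_pred_of_def q_def by simp
  moreover have "chain_far_target k (F q) = X (F s)"
    using far_target_label[OF q] far_target_of_far_pred[OF s m] X_label[OF s] unfolding q_def by simp
  moreover have "X (F s) = X (F q) + 1 + chain_far_count k (F q)"
    using far_pred_gap[OF s m] X_label[OF s] X_label[OF q] far_count_label[OF q] unfolding q_def by simp
  ultimately show ?thesis unfolding bex_view using vq X_label[OF s] X_label[OF q] by auto
qed

lemma chain_check_honest:
  assumes v: "v \<in> V"
  shows "chain_check (ident v) (F v) (view v) X Y k"
  unfolding chain_check_def
  using mode_label[OF v] chain_mode_of_le X_label[OF v] chain_mode_of_eq_0
    honest_near_pred[OF v] honest_relay[OF v] honest_far_count[OF v]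
    honest_near_gap[OF v] honest_far_gap[OF v]
  by (auto simp: ball_view)

end

definition bfs_depth :: "(nat \<Rightarrow> nat \<Rightarrow> bool) \<Rightarrow> nat \<Rightarrow> nat \<Rightarrow> nat" where
  "bfs_depth E r v = (LEAST k. (E ^^ k) r v)"

definition bfs_parent :: "(nat \<Rightarrow> nat \<Rightarrow> bool) \<Rightarrow> nat \<Rightarrow> nat \<Rightarrow> nat" where
  "bfs_parent E r v = (if v = r then r else SOME u. E v u \<and> Suc (bfs_depth E r u) = bfs_depth E r v)"

definition bfs_subtree :: "nat set \<Rightarrow> (nat \<Rightarrow> nat \<Rightarrow> bool) \<Rightarrow> nat \<Rightarrow> nat \<Rightarrow> nat set" where
  "bfs_subtree V E r v = {u\<in>V. \<exists>k. (bfs_parent E r ^^ k) u = v}"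

definition bfs_children :: "nat set \<Rightarrow> (nat \<Rightarrow> nat \<Rightarrow> bool) \<Rightarrow> nat \<Rightarrow> nat \<Rightarrow> nat set" where
  "bfs_children V E r v = {u\<in>V. u \<noteq> r \<and> bfs_parent E r u = v}"

locale bfs_tree =
  fixes V :: "nat set" and E :: "nat \<Rightarrow> nat \<Rightarrow> bool" and r :: nat
  assumes fin: "finite V"
    and sym: "\<forall>u v. E u v \<longrightarrow> u \<in> V \<and> v \<in> V \<and> E v u"
    and conn: "\<forall>u\<in>V. \<forall>v\<in>V. E\<^sup>*\<^sup>* u v"
    and root_in: "r \<in> V"
begin

abbreviation "depth \<equiv> bfs_depth E r"
abbreviation "parent \<equiv> bfs_parent E r"
abbreviation "subtree \<equiv> bfs_subtree V E r"
abbreviation "children \<equiv> bfs_children V E r"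

lemma depth_path: "u \<in> V \<Longrightarrow> (E ^^ depth u) r u"
  unfolding bfs_depth_def
  by (rule LeastI_ex) (use conn root_in in \<open>auto simp: rtranclp_power\<close>)

lemma depth_le: "(E ^^ k) r u \<Longrightarrow> depth u \<le> k"
  unfolding bfs_depth_def by (rule Least_le)

lemma depth_eq_0_iff: "u \<in> V \<Longrightarrow> depth u = 0 \<longleftrightarrow> u = r"
  using depth_path[of u] depth_le[of 0 r] by auto

lemma bfs_parent_edge:
  assumes u: "u \<in> V" and not_root: "u \<noteq> r"
  shows "E u (parent u) \<and> Suc (depth (parent u)) = depth u \<and> parent u \<in> V"
proof -
  obtain m where m: "depth u = Suc m"
    using depth_eq_0_iff[OF u] not_root by (cases "depth u") auto
  then obtain w where w: "(E ^^ m) r w" "E w u"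
    using depth_path[OF u] by (auto elim: relpowp_Suc_E)
  have "w \<in> V" using w(2) sym by blast
  then have "depth u \<le> Suc (depth w)"
    using depth_le[OF relpowp_Suc_I[OF depth_path w(2)]] by blast
  then have "Suc (depth w) = depth u" using depth_le[OF w(1)] m by simp
  then have "\<exists>w. E u w \<and> Suc (depth w) = depth u" using w(2) sym by blast
  then have "E u (parent u) \<and> Suc (depth (parent u)) = depth u"
    unfolding bfs_parent_def using not_root someI_ex by simp
  then show ?thesis using sym by blast
qed

lemma bfs_parent_root: "parent r = r"
  unfolding bfs_parent_def by simp

lemma bfs_parent_iterate: "u \<in> V \<Longrightarrow> (parent ^^ k) u \<in> V \<and> depth ((parent ^^ k) u) = depth u - k"
proof (induction k)
  case (Suc k)
  define w where "w = (parent ^^ k) u"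
  have w: "w \<in> V" "depth w = depth u - k" using Suc unfolding w_def by auto
  have "parent w \<in> V \<and> depth (parent w) = depth u - Suc k"
  proof (cases "w = r")
    case True
    then show ?thesis using depth_eq_0_iff[OF root_in] w bfs_parent_root root_in by simp
  next
    case False
    then show ?thesis using bfs_parent_edge[OF w(1)] w(2) by auto
  qed
  then show ?case unfolding w_def by simp
qed simp

lemma bfs_subtree_root: "subtree r = V"
proof (intro equalityI subsetI)
  fix u assume u: "u \<in> V"
  then have "depth ((parent ^^ depth u) u) = 0" "(parent ^^ depth u) u \<in> V"
    using bfs_parent_iterate[OF u, of "depth u"] by auto
  then have "(parent ^^ depth u) u = r" using depth_eq_0_iff by blast
  then show "u \<in> subtree r" unfolding bfs_subtree_def using u by blast
qed (auto simp: bfs_subtree_def)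

lemma bfs_subtree_subset: "subtree v \<subseteq> V"
  unfolding bfs_subtree_def by auto

lemma finite_bfs_subtree: "finite (subtree v)"
  using fin bfs_subtree_subset by (rule finite_subset[rotated])

lemma bfs_children_depth: "u \<in> children v \<Longrightarrow> depth u = Suc (depth v)"
  unfolding bfs_children_def using bfs_parent_edge by auto

lemma bfs_ancestor_depth: "z \<in> V \<Longrightarrow> (parent ^^ k) z = v \<Longrightarrow> depth v = depth z - k"
  using bfs_parent_iterate by blast

lemma bfs_ancestor_cases:
  "z \<in> V \<Longrightarrow> (parent ^^ k) z = v \<Longrightarrow> z = v \<or> (\<exists>u\<in>children v. z \<in> subtree u)"
proof (induction k arbitrary: v)
  case (Suc k)
  define u where "u = (parent ^^ k) z"
  have u: "u \<in> V" using bfs_parent_iterate[OF Suc.prems(1)] unfolding u_def by blast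
  have parent_u: "parent u = v" using Suc.prems(2) unfolding u_def by simp
  show ?case
  proof (cases "u = r")
    case True
    then have "(parent ^^ k) z = v" using parent_u bfs_parent_root unfolding u_def by simp
    then show ?thesis using Suc.IH Suc.prems(1) by blast
  next
    case False
    then have "u \<in> children v" using u parent_u unfolding bfs_children_def by simp
    moreover have "z \<in> subtree u" unfolding bfs_subtree_def u_def using Suc.prems(1) by blast
    ultimately show ?thesis by blast
  qed
qed simp

lemma bfs_subtree_decomp:
  assumes v: "v \<in> V"
  shows "subtree v = insert v (\<Union>u\<in>children v. subtree u)"
proof (intro equalityI subsetI)
  fix z assume "z \<in> subtree v"
  then show "z \<in> insert v (\<Union>u\<in>children v. subtree u)"
    unfolding bfs_subtree_def[of V E r v] using bfs_ancestor_cases by blast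
next
  fix z assume "z \<in> insert v (\<Union>u\<in>children v. subtree u)"
  then consider "z = v" | u where "u \<in> children v" "z \<in> subtree u" by blast
  then show "z \<in> subtree v"
  proof cases
    case 1
    then show ?thesis unfolding bfs_subtree_def using v by (auto intro: exI[of _ 0])
  next
    case 2
    then obtain k where "z \<in> V" "(parent ^^ k) z = u" unfolding bfs_subtree_def by blast
    moreover have "parent u = v" using 2(1) unfolding bfs_children_def by simp
    ultimately show ?thesis unfolding bfs_subtree_def by (auto intro: exI[of _ "Suc k"])
  qed
qed

lemma sum_bfs_subtree:
  assumes v: "v \<in> V"
  shows "(\<Sum>z\<in>subtree v. g z) = g v + (\<Sum>u\<in>children v. \<Sum>z\<in>subtree u. g z)"
proof -
  have "subtree u1 \<inter> subtree u2 = {}"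
    if "u1 \<in> children v" "u2 \<in> children v" "u1 \<noteq> u2" for u1 u2
  proof -
    have "k1 = k2" if "z \<in> V" "(parent ^^ k1) z = u1" "(parent ^^ k2) z = u2" for z k1 k2
    proof -
      have "depth z - k1 = Suc (depth v)" "depth z - k2 = Suc (depth v)"
        using bfs_ancestor_depth[OF that(1,2)] bfs_ancestor_depth[OF that(1,3)]
          bfs_children_depth \<open>u1 \<in> children v\<close> \<open>u2 \<in> children v\<close> by auto
      then show ?thesis by arith
    qed
    then show ?thesis using \<open>u1 \<noteq> u2\<close> unfolding bfs_subtree_def by blast
  qed
  moreover have "v \<notin> subtree u" if "u \<in> children v" for u
  proof
    assume "v \<in> subtree u"
    then obtain k where "v \<in> V" "(parent ^^ k) v = u" unfolding bfs_subtree_def by blast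
    then have "depth u = depth v - k" by (rule bfs_ancestor_depth)
    then show False using bfs_children_depth[OF that] by simp
  qed
  moreover have "finite (children v)" using fin unfolding bfs_children_def by simp
  ultimately show ?thesis
    using bfs_subtree_decomp[OF v] finite_bfs_subtree by (simp add: sum.UNION_disjoint)
qed

end

context discordance_model
begin

lemma chain_pred_of_in:
  assumes v: "v \<in> V"
  shows "chain_pred_of V E ident A B v \<in> insert 0 (ident ` V)"
proof -
  have "chain_mode_of E A v = 1 \<Longrightarrow> near_pred E A v \<in> V"
    using near_pred_edge edge_in_V2 by blast
  moreover have "chain_mode_of E A v = 2 \<Longrightarrow> far_pred V A B v \<in> V"
    using far_pred_max[OF v] chain_mode_of_eq_2 by blast
  ultimately show ?thesis unfolding chain_pred_of_def by auto
qed

lemma chain_relay_of_in: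
  assumes v: "v \<in> V"
  shows "chain_relay_of V E ident A B v \<in> insert 0 (ident ` V)"
proof -
  have "chain_mode_of E A v = 2 \<Longrightarrow> far_relay V E A B v \<in> V"
    using far_relay_edges[OF v] edge_in_V2 by blast
  then show ?thesis unfolding chain_relay_of_def by auto
qed

lemma far_target_of_le: "far_target_of V E A B v \<le> card V"
proof (cases "\<exists>w\<in>V. chain_mode_of E A w = 2 \<and> far_pred V A B w = v")
  case True
  then have "(SOME w. w \<in> V \<and> chain_mode_of E A w = 2 \<and> far_pred V A B w = v) \<in> V"
    by (metis (mono_tags, lifting) someI_ex)
  then show ?thesis unfolding far_target_of_def using True A_less less_imp_le by auto
qed (auto simp: far_target_of_def)

lemma card_neighbours_le: "card {u. E v u \<and> P u} \<le> card V"
  using fin edge_in_V2 by (intro card_mono) auto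

end

definition honest_cert ::
    "nat set \<Rightarrow> (nat \<Rightarrow> nat \<Rightarrow> bool) \<Rightarrow> (nat \<Rightarrow> nat) \<Rightarrow> (nat \<Rightarrow> nat) \<Rightarrow> (nat \<Rightarrow> nat) \<Rightarrow> nat \<Rightarrow> nat \<Rightarrow> nat list"
  where
  "honest_cert V E ident X Y r v =
    [ident r, ident (bfs_parent E r v), card (bfs_subtree V E r v),
     \<Sum>z\<in>bfs_subtree V E r v. X z, \<Sum>z\<in>bfs_subtree V E r v. Y z, X v, Y v,
     chain_mode_of E X v, chain_pred_of V E ident X Y v, chain_relay_of V E ident X Y v,
     near_count_of E X Y v, far_target_of V E X Y v, far_count_of V E X Y v,
     chain_mode_of E Y v, chain_pred_of V E ident Y X v, chain_relay_of V E ident Y X v,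
     near_count_of E Y X v, far_target_of V E Y X v, far_count_of V E Y X v]"

locale honest_labelling =
  fixes V :: "nat set" and E :: "nat \<Rightarrow> nat \<Rightarrow> bool" and ident :: "nat \<Rightarrow> nat"
    and X Y :: "nat \<Rightarrow> nat" and r :: nat
  assumes fin: "finite V"
    and conn: "\<forall>u\<in>V. \<forall>v\<in>V. E\<^sup>*\<^sup>* u v"
    and inj: "inj_on ident V"
    and bij_X: "bij_betw X V {0..<card V}" and bij_Y: "bij_betw Y V {0..<card V}"
    and edge: "\<forall>u v. E u v \<longleftrightarrow> u \<in> V \<and> v \<in> V \<and> discordant X Y u v"
    and root_in: "r \<in> V"
begin

abbreviation "G \<equiv> honest_cert V E ident X Y r"

lemma length_honest_cert: "length (G v) = 19"
  by (simp add: honest_cert_def)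

lemma honest_cert_fields:
  "root_id (G v) = ident r" "parent_id (G v) = ident (bfs_parent E r v)"
  "subtree_size (G v) = card (bfs_subtree V E r v)"
  "subtree_sum_x (G v) = (\<Sum>z\<in>bfs_subtree V E r v. X z)"
  "subtree_sum_y (G v) = (\<Sum>z\<in>bfs_subtree V E r v. Y z)"
  "pos_x (G v) = X v" "pos_y (G v) = Y v"
  "chain_mode 7 (G v) = chain_mode_of E X v" "chain_pred 7 (G v) = chain_pred_of V E ident X Y v"
  "chain_relay 7 (G v) = chain_relay_of V E ident X Y v"
  "chain_near_count 7 (G v) = near_count_of E X Y v"
  "chain_far_target 7 (G v) = far_target_of V E X Y v"
  "chain_far_count 7 (G v) = far_count_of V E X Y v"
  "chain_mode 13 (G v) = chain_mode_of E Y v" "chain_pred 13 (G v) = chain_pred_of V E ident Y X v"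
  "chain_relay 13 (G v) = chain_relay_of V E ident Y X v"
  "chain_near_count 13 (G v) = near_count_of E Y X v"
  "chain_far_target 13 (G v) = far_target_of V E Y X v"
  "chain_far_count 13 (G v) = far_count_of V E Y X v"
  by (simp_all add: honest_cert_def root_id_def parent_id_def subtree_size_def subtree_sum_x_def
      subtree_sum_y_def pos_x_def pos_y_def chain_mode_def chain_pred_def chain_relay_def
      chain_near_count_def chain_far_target_def chain_far_count_def)

lemma sym: "\<forall>u v. E u v \<longrightarrow> u \<in> V \<and> v \<in> V \<and> E v u"
  using edge unfolding discordant_def by blast

sublocale network: labelled_network V E ident G
  using fin root_in sym conn inj by unfold_locales auto

sublocale tree: bfs_tree V E r
  using fin sym conn root_in by unfold_locales auto

sublocale x_chain: honest_chain V E ident G X Y pos_x pos_y 7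
  using bij_X bij_Y edge by unfold_locales (simp_all add: honest_cert_fields)

sublocale y_chain: honest_chain V E ident G Y X pos_y pos_x 13
  using bij_X bij_Y edge by unfold_locales (auto simp: honest_cert_fields discordant_def)

lemma sum_honest_tree_children:
  assumes v: "v \<in> V"
  shows "(\<Sum>p\<in>tree_children (ident v) (network.view v). h (snd p)) = (\<Sum>u\<in>bfs_children V E r v. h (G u))"
proof -
  have "{u. E v u \<and> parent_id (G u) = ident v \<and> ident u \<noteq> root_id (G u)} = bfs_children V E r v"
  proof (intro equalityI subsetI)
    fix u assume "u \<in> {u. E v u \<and> parent_id (G u) = ident v \<and> ident u \<noteq> root_id (G u)}"
    then have vu: "E v u" and parent: "ident (bfs_parent E r u) = ident v" and "ident u \<noteq> ident r"
      by (auto simp: honest_cert_fields)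
    then have u: "u \<in> V" and not_root: "u \<noteq> r" using network.edge_in_V2 by auto
    then have "bfs_parent E r u \<in> V" using tree.bfs_parent_edge by blast
    then have "bfs_parent E r u = v" using parent v network.ident_eq_iff by blast
    then show "u \<in> bfs_children V E r v" unfolding bfs_children_def using u not_root by simp
  next
    fix u assume "u \<in> bfs_children V E r v"
    then have u: "u \<in> V" "u \<noteq> r" "bfs_parent E r u = v" unfolding bfs_children_def by auto
    then have "E v u" using tree.bfs_parent_edge[OF u(1,2)] network.edge_sym by auto
    moreover have "ident u \<noteq> ident r" using u(1,2) root_in network.ident_eq_iff by blast
    ultimately show "u \<in> {u. E v u \<and> parent_id (G u) = ident v \<and> ident u \<noteq> root_id (G u)}"
      using u(3) by (simp add: honest_cert_fields)
  qed
  then show ?thesis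
    using network.sum_view[where v = v and P = "\<lambda>p. parent_id (snd p) = ident v \<and> fst p \<noteq> root_id (snd p)"]
    unfolding tree_children_def by simp
qed

lemma local_check_honest:
  assumes v: "v \<in> V"
  shows "local_check (ident v) (G v) (network.view v)"
proof -
  have root_ids: "\<forall>p\<in>network.view v. root_id (snd p) = root_id (G v)"
    unfolding network.ball_view by (simp add: honest_cert_fields)
  have root: "2 * subtree_sum_x (G v) = subtree_size (G v) * (subtree_size (G v) - 1)
      \<and> 2 * subtree_sum_y (G v) = subtree_size (G v) * (subtree_size (G v) - 1)"
    if "ident v = root_id (G v)"
  proof -
    have "v = r" using that v root_in network.ident_eq_iff by (simp add: honest_cert_fields)
    then show ?thesis
      using double_sum_bij_betw_interval[OF bij_X] double_sum_bij_betw_interval[OF bij_Y]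
      by (simp add: honest_cert_fields tree.bfs_subtree_root)
  qed
  have parent: "\<exists>p\<in>network.view v. fst p = parent_id (G v)" if "ident v \<noteq> root_id (G v)"
  proof -
    have "v \<noteq> r" using that by (auto simp: honest_cert_fields)
    then have "E v (bfs_parent E r v)" using tree.bfs_parent_edge[OF v] by simp
    then show ?thesis unfolding network.bex_view by (auto simp: honest_cert_fields)
  qed
  have tree_check: "if ident v = root_id (G v)
      then 2 * subtree_sum_x (G v) = subtree_size (G v) * (subtree_size (G v) - 1)
        \<and> 2 * subtree_sum_y (G v) = subtree_size (G v) * (subtree_size (G v) - 1)
      else (\<exists>p\<in>network.view v. fst p = parent_id (G v))"
    using root parent by simp
  have subtree_field: "s (G v) = g v + (\<Sum>p\<in>tree_children (ident v) (network.view v). s (snd p))"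
    if "\<And>u. s (G u) = (\<Sum>z\<in>bfs_subtree V E r u. g z)" for s :: "nat list \<Rightarrow> nat" and g
  proof -
    have "s (G v) = g v + (\<Sum>u\<in>bfs_children V E r v. s (G u))"
      unfolding that by (rule tree.sum_bfs_subtree[OF v])
    then show ?thesis by (simp only: sum_honest_tree_children[OF v])
  qed
  have size: "subtree_size (G v) = 1 + (\<Sum>p\<in>tree_children (ident v) (network.view v). subtree_size (snd p))"
    by (rule subtree_field[where g = "\<lambda>_. 1"]) (simp add: honest_cert_fields)
  have sum_x: "subtree_sum_x (G v) = pos_x (G v) + (\<Sum>p\<in>tree_children (ident v) (network.view v). subtree_sum_x (snd p))"
    unfolding honest_cert_fields(6) by (rule subtree_field) (simp add: honest_cert_fields)
  have sum_y: "subtree_sum_y (G v) = pos_y (G v) + (\<Sum>p\<in>tree_children (ident v) (network.view v). subtree_sum_y (snd p))"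
    unfolding honest_cert_fields(7) by (rule subtree_field) (simp add: honest_cert_fields)
  have discordant_nbrs: "\<forall>p\<in>network.view v. discordant pos_x pos_y (G v) (snd p)"
    unfolding network.ball_view using edge by (simp add: honest_cert_fields discordant_def)
  have "{u. E v u \<and> X u < X v} = {z\<in>V. X z < X v \<and> Y v < Y z}"
    and "{u. E v u \<and> X v < X u} = {z\<in>V. X v < X z \<and> Y z < Y v}"
    using edge v unfolding discordant_def by auto
  then have balanced: "int (card {p\<in>network.view v. pos_x (snd p) < pos_x (G v)})
      - int (card {p\<in>network.view v. pos_x (G v) < pos_x (snd p)}) = int (pos_x (G v)) - int (pos_y (G v))"
    unfolding network.card_view using discordant_balance[OF fin bij_X bij_Y v]
    by (simp add: honest_cert_fields)
  show ?thesis
    unfolding local_check_def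
    using root_ids tree_check size sum_x sum_y discordant_nbrs balanced
      x_chain.chain_check_honest[OF v] y_chain.chain_check_honest[OF v]
    by blast
qed

end

context honest_labelling
begin

lemma all_accept_honest: "all_accept perm_verifier V E ident (\<lambda>v. nats_code (G v))"
  unfolding all_accept_def
proof
  fix v assume v: "v \<in> V"
  have decode: "nats_decode 19 (nats_code (G u)) = Some (G u)" for u
    by (rule nats_decode_nats_code[OF length_honest_cert])
  have "(\<lambda>p. (fst p, the (nats_decode 19 (snd p)))) ` (\<lambda>u. (ident u, nats_code (G u))) ` {u. E v u}
      = network.view v"
    unfolding network.view_def by (simp add: image_image decode)
  then show "perm_verifier (ident v) (nats_code (G v)) {(ident u, nats_code (G u)) | u. E v u}"
    unfolding perm_verifier_def setcompr_eq_image using decode local_check_honest[OF v] by auto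
qed

lemma honest_cert_le:
  assumes ident_le: "\<forall>u\<in>V. ident u \<le> card V ^ c" and v: "v \<in> V"
  shows "\<forall>k\<in>set (G v). k \<le> (card V + 1) ^ (c + 2)"
proof -
  define n where "n = card V"
  define bound where "bound = (n + 1) ^ (c + 2)"
  have "n ^ c \<le> (n + 1) ^ c" by (rule power_mono) auto
  also have "\<dots> \<le> bound" unfolding bound_def by (rule power_increasing) auto
  finally have ident_bound: "\<forall>k\<in>insert 0 (ident ` V). k \<le> bound"
    using ident_le unfolding n_def by auto
  have "n * n \<le> (n + 1) ^ 2" by (simp add: power2_eq_square)
  also have "\<dots> \<le> bound" unfolding bound_def by (rule power_increasing) auto
  finally have square_bound: "n * n \<le> bound" .
  have "(n + 1) ^ 1 \<le> bound" unfolding bound_def by (rule power_increasing) auto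
  then have n_bound: "n + 1 \<le> bound" by simp
  have "n > 0" using fin root_in card_gt_0_iff unfolding n_def by blast
  then have mode_bound: "chain_mode_of E Z v \<le> bound" for Z
    using n_bound unfolding chain_mode_of_def by simp
  have count_bound: "card {u. E w u \<and> P u} \<le> bound" for w P
    using x_chain.card_neighbours_le n_bound unfolding n_def by (meson add_leD1 le_trans)
  have subtree_sum_bound: "(\<Sum>z\<in>bfs_subtree V E r v. Z z) \<le> bound" if "\<forall>z\<in>V. Z z < n" for Z
  proof -
    have "(\<Sum>z\<in>bfs_subtree V E r v. Z z) \<le> (\<Sum>z\<in>bfs_subtree V E r v. n)"
      using that tree.bfs_subtree_subset by (intro sum_mono) (auto intro: less_imp_le)
    also have "\<dots> = card (bfs_subtree V E r v) * n" by simp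
    also have "\<dots> \<le> n * n"
      using card_mono[OF fin tree.bfs_subtree_subset] unfolding n_def by simp
    finally show ?thesis using square_bound by simp
  qed
  have "bfs_parent E r v \<in> V"
    using tree.bfs_parent_edge[OF v] tree.bfs_parent_root root_in by (cases "v = r") auto
  then have "ident r \<le> bound" "ident (bfs_parent E r v) \<le> bound"
    using ident_bound root_in by auto
  moreover have "chain_pred_of V E ident X Y v \<le> bound" "chain_relay_of V E ident X Y v \<le> bound"
    "chain_pred_of V E ident Y X v \<le> bound" "chain_relay_of V E ident Y X v \<le> bound"
    using ident_bound x_chain.chain_pred_of_in[OF v] x_chain.chain_relay_of_in[OF v]
      y_chain.chain_pred_of_in[OF v] y_chain.chain_relay_of_in[OF v] by blast+
  moreover have "card (bfs_subtree V E r v) \<le> bound"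
    using card_mono[OF fin tree.bfs_subtree_subset[of v]] n_bound unfolding n_def by linarith
  moreover have "(\<Sum>z\<in>bfs_subtree V E r v. X z) \<le> bound" "(\<Sum>z\<in>bfs_subtree V E r v. Y z) \<le> bound"
    using subtree_sum_bound x_chain.A_less x_chain.B_less unfolding n_def by blast+
  moreover have "X v \<le> bound" "Y v \<le> bound"
    using x_chain.A_less[OF v] x_chain.B_less[OF v] n_bound unfolding n_def by linarith+
  moreover have "far_target_of V E X Y v \<le> bound" "far_target_of V E Y X v \<le> bound"
    using x_chain.far_target_of_le y_chain.far_target_of_le n_bound unfolding n_def by (meson add_leD1 le_trans)+
  moreover have "near_count_of E X Y v \<le> bound" "near_count_of E Y X v \<le> bound"
    "far_count_of V E X Y v \<le> bound" "far_count_of V E Y X v \<le> bound"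
    using count_bound unfolding near_count_of_def far_count_of_def by simp_all
  ultimately show ?thesis
    using mode_bound unfolding honest_cert_def bound_def n_def by simp
qed

lemma length_honest_code_le:
  assumes "\<forall>u\<in>V. ident u \<le> card V ^ c" and v: "v \<in> V"
  shows "real (length (nats_code (G v))) \<le> real (19 * (2 * (c + 2) + 3)) * log 2 (real (card V) + 1)"
proof -
  have "card V > 0" using fin root_in card_gt_0_iff by blast
  then have "card V \<ge> 1" by simp
  then have "real (length (nats_code (G v)))
      \<le> real (length (G v)) * ((2 * real (c + 2) + 3) * log 2 (real (card V) + 1))"
    using honest_cert_le[OF assms] by (intro length_nats_code_le_log) auto
  then show ?thesis by (simp add: length_honest_cert algebra_simps)
qed

end

lemma completeness:
  assumes net: "network c V E ident" and perm: "is_permutation_graph V E"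
  shows "\<exists>cert. (\<forall>v\<in>V. real (length (cert v)) \<le> real (19 * (2 * (c + 2) + 3)) * log 2 (real (card V) + 1))
    \<and> all_accept perm_verifier V E ident cert"
proof -
  obtain X Y where X: "bij_betw X V {0..<card V}" and Y: "bij_betw Y V {0..<card V}"
    and discordant_edges: "\<forall>u\<in>V. \<forall>v\<in>V. E u v \<longleftrightarrow> discordant X Y u v"
    using perm unfolding is_permutation_graph_iff_discordant_rankings by blast
  have "V \<noteq> {}" using net unfolding network_def connected_graph_def by simp
  then obtain r where r: "r \<in> V" by blast
  interpret honest_labelling V E ident X Y r
    using net X Y discordant_edges r unfolding network_def simple_graph_def connected_graph_def
    by unfold_locales blast+
  have "\<forall>u\<in>V. ident u \<le> card V ^ c" using net unfolding network_def by simp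
  then show ?thesis
    using length_honest_code_le all_accept_honest by (intro exI[of _ "\<lambda>v. nats_code (G v)"]) simp
qed

theorem theorem1:
  fixes c :: nat
  shows "\<exists>(D :: verifier) (K :: real).
    \<forall>V E ident. network c V E ident \<longrightarrow>
      ((is_permutation_graph V E \<longrightarrow>
          (\<exists>cert. (\<forall>v\<in>V. real (length (cert v)) \<le> K * log 2 (real (card V) + 1))
                 \<and> all_accept D V E ident cert))
       \<and> (\<not> is_permutation_graph V E \<longrightarrow> (\<forall>cert. \<not> all_accept D V E ident cert)))"
proof (intro exI[of _ perm_verifier] exI[of _ "real (19 * (2 * (c + 2) + 3))"] allI impI conjI)
  fix V E ident assume net: "network c V E ident"
  show "\<exists>cert. (\<forall>v\<in>V. real (length (cert v)) \<le> real (19 * (2 * (c + 2) + 3)) * log 2 (real (card V) + 1))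
      \<and> all_accept perm_verifier V E ident cert" if "is_permutation_graph V E"
    using completeness[OF net that] .
  show "\<not> all_accept perm_verifier V E ident cert" if "\<not> is_permutation_graph V E" for cert
    using soundness[OF net] that by blast
qed

end
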